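(* Let $\Sigma=\{a,b,e\}$ and let $L_1$ be the language of words $w\in\Sigma^*$ such that the word obtained from $w$ by deleting all occurrences of $e$ belongs to $b^+a$. Assuming the prefix-$U_1$ hypothesis, $L_1$ is not tractable.
   Context: For $w=a_1\cdots a_n$, an $L$-infix is a pair $[i,j]$ with $1\le i\le j\le n$ and $a_i\cdots a_j\in L$. $L$ is tractable if there is a data structure, built on an input word $w$, supporting letter substitution updates (replace the $i$-th letter by a given letter) and enumeration queries (output every $L$-infix of the current word exactly once, any order), and a constant $B$ depending only on $L$ such that for every $w$: each update takes at most $B$ steps; during an enumeration query the next $L$-infix (or the conclusion that none remain) is produced within $B$ steps; an enumeration query uses at most $B$ additional memory cells and treats previously existing memory as read-only; building takes at most $B|w|$ steps and memory never exceeds $B|w|$ cells. Model: unit-cost RAM with cell size logarithmic in $|w|$. The prefix-$U_1$ problem asks, for $n\in\mathbb{N}$, for a data structure maintaining a set $S\subseteq\{1,\dots,n\}$ supporting, on input $i\le n$: (1) test whether $i\in S$; (2) insert $i$ into $S$; (3) remove $i$ from $S$; (4) return yes iff $i\le\min S$. The prefix-$U_1$ hypothesis states that no data structure performs all these operations in time independent of $n$ in the unit-cost RAM model with logarithmic cell size. *)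

theory Defs
  imports Main
begin

datatype sym = SA | SB | SE

definition L1 :: "sym list set" where
  "L1 = {w. \<exists>k\<ge>1. filter (\<lambda>x. x \<noteq> SE) w = replicate k SB @ [SA]}"

(* L-infixes [i,j] (1-based, inclusive) of w *)
definition infixes :: "sym list set \<Rightarrow> sym list \<Rightarrow> (nat \<times> nat) set" where
  "infixes L w = {(i, j). 1 \<le> i \<and> i \<le> j \<and> j \<le> length w \<and>
                          take (j - i + 1) (drop (i - 1) w) \<in> L}"

(* Memory cells are addressed by naturals; registers are just memory cells.
   Const a v : M[a] := v
   Add/Sub/Mul/Div a b c : M[a] := M[b] op M[c]  (truncated subtraction, x div 0 = 0)
   Load a b : M[a] := M[M[b]]      Store a b : M[M[a]] := M[b]
   Inp a b : M[a] := input(M[b])    Jz a l : if M[a] = 0 then goto l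
   Out a b : output the pair (M[a], M[b])     Halt *)
datatype instr =
    Const nat nat | Add nat nat nat | Sub nat nat nat | Mul nat nat nat | Div nat nat nat
  | Load nat nat | Store nat nat | Inp nat nat | Jz nat nat | Out nat nat | Halt

type_synonym mem = "nat \<Rightarrow> nat"
type_synonym conf = "nat \<times> mem"

definition halted :: "instr list \<Rightarrow> conf \<Rightarrow> bool" where
  "halted prog c = (length prog \<le> fst c \<or> prog ! fst c = Halt)"

(* writing value v to address a: fails if a is not a writable address or
   the value exceeds the cell capacity cap (logarithmic cell size) *)
definition wr :: "nat set \<Rightarrow> nat \<Rightarrow> nat \<Rightarrow> mem \<Rightarrow> nat \<Rightarrow> nat
                   \<Rightarrow> (conf \<times> (nat \<times> nat) list) option" where
  "wr W cap pc M a v = (if a \<in> W \<and> v < cap then Some ((Suc pc, M(a := v)), []) else None)"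

(* one step; inp = read-only input, cap = cell capacity, W = writable addresses;
   returns the new configuration and the produced outputs, or None on a fault *)
definition step :: "instr list \<Rightarrow> (nat \<Rightarrow> nat) \<Rightarrow> nat \<Rightarrow> nat set \<Rightarrow> conf
                     \<Rightarrow> (conf \<times> (nat \<times> nat) list) option" where
  "step prog inp cap W c = (case c of (pc, M) \<Rightarrow>
     (case prog ! pc of
        Const a v \<Rightarrow> wr W cap pc M a v
      | Add a b d \<Rightarrow> wr W cap pc M a (M b + M d)
      | Sub a b d \<Rightarrow> wr W cap pc M a (M b - M d)
      | Mul a b d \<Rightarrow> wr W cap pc M a (M b * M d)
      | Div a b d \<Rightarrow> wr W cap pc M a (M b div M d)
      | Load a b \<Rightarrow> wr W cap pc M a (M (M b))
      | Store a b \<Rightarrow> wr W cap pc M (M a) (M b)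
      | Inp a b \<Rightarrow> wr W cap pc M a (inp (M b))
      | Jz a l \<Rightarrow> Some ((if M a = 0 then l else Suc pc, M), [])
      | Out a b \<Rightarrow> Some ((Suc pc, M), [(M a, M b)])
      | Halt \<Rightarrow> Some ((pc, M), [])))"

fun steps :: "instr list \<Rightarrow> (nat \<Rightarrow> nat) \<Rightarrow> nat \<Rightarrow> nat set \<Rightarrow> nat \<Rightarrow> conf
               \<Rightarrow> (conf \<times> (nat \<times> nat) list) option" where
  "steps prog inp cap W 0 c = Some (c, [])"
| "steps prog inp cap W (Suc k) c =
     (if halted prog c then Some (c, [])
      else (case step prog inp cap W c of
              None \<Rightarrow> None
            | Some (c', os) \<Rightarrow> (case steps prog inp cap W k c' of
                                   None \<Rightarrow> None
                                 | Some (c'', os') \<Rightarrow> Some (c'', os @ os'))))"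

definition halts_within :: "instr list \<Rightarrow> (nat \<Rightarrow> nat) \<Rightarrow> nat \<Rightarrow> nat set \<Rightarrow> nat
                             \<Rightarrow> conf \<Rightarrow> conf \<Rightarrow> bool" where
  "halts_within prog inp cap W t c c' =
     (\<exists>k\<le>t. \<exists>os. steps prog inp cap W k c = Some (c', os) \<and> halted prog c')"

definition zero_mem :: mem where "zero_mem = (\<lambda>_. 0)"

section \<open>Tractability (dynamic constant-delay enumeration of infixes)\<close>

definition code :: "sym \<Rightarrow> nat" where
  "code x = (case x of SA \<Rightarrow> 1 | SB \<Rightarrow> 2 | SE \<Rightarrow> 3)"

definition word_input :: "sym list \<Rightarrow> nat \<Rightarrow> nat" where
  "word_input w k = (if k = 0 then length w else if k \<le> length w then code (w ! (k - 1)) else 0)"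

definition upd_input :: "nat \<Rightarrow> sym \<Rightarrow> nat \<Rightarrow> nat" where
  "upd_input i a k = (if k = 0 then i else if k = 1 then code a else 0)"

(* cell capacity for words of length n: values < (n+2)^K, i.e. O(log n) bits *)
definition capacity :: "nat \<Rightarrow> nat \<Rightarrow> nat" where
  "capacity K n = (n + 2) ^ K"

definition main_region :: "nat \<Rightarrow> nat \<Rightarrow> nat set" where
  "main_region B n = {..< B * (n + 1)}"

(* the B additional cells available to an enumeration (all other memory read-only) *)
definition scratch_region :: "nat \<Rightarrow> nat \<Rightarrow> nat set" where
  "scratch_region B n = {B * (n + 1) ..< B * (n + 1) + B}"

inductive reach :: "instr list \<Rightarrow> instr list \<Rightarrow> nat \<Rightarrow> nat \<Rightarrow> sym list \<Rightarrow> mem \<Rightarrow> bool"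
  for P U :: "instr list" and B K :: nat where
  init: "halts_within P (word_input w) (capacity K (length w)) (main_region B (length w))
           (B * (length w + 1)) (0, zero_mem) (pc, M) \<Longrightarrow> reach P U B K w M"
| upd: "reach P U B K w M \<Longrightarrow> 1 \<le> i \<Longrightarrow> i \<le> length w \<Longrightarrow>
        halts_within U (upd_input i a) (capacity K (length w)) (main_region B (length w))
           B (0, M) (pc, M') \<Longrightarrow> reach P U B K (w[i - 1 := a]) M'"

(* enumeration on memory M: halts, outputs exactly the set S, each element once,
   with delay at most B between consecutive outputs / start / end *)
definition enum_ok :: "instr list \<Rightarrow> nat \<Rightarrow> nat set \<Rightarrow> nat \<Rightarrow> mem \<Rightarrow> (nat \<times> nat) set \<Rightarrow> bool" where
  "enum_ok E cap W B M S =
     ((\<exists>k c os. steps E (\<lambda>_. 0) cap W k (0, M) = Some (c, os) \<and> halted E c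
                \<and> distinct os \<and> set os = S) \<and>
      (\<forall>k c os. steps E (\<lambda>_. 0) cap W k (0, M) = Some (c, os) \<and> \<not> halted E c \<longrightarrow>
         (\<exists>d. 1 \<le> d \<and> d \<le> B \<and> (\<exists>c' os'. steps E (\<lambda>_. 0) cap W (k + d) (0, M) = Some (c', os')
                  \<and> (length os < length os' \<or> halted E c')))))"

definition tractable :: "sym list set \<Rightarrow> bool" where
  "tractable L = (\<exists>P U E :: instr list. \<exists>B K :: nat.
     (\<forall>w. \<exists>c. halts_within P (word_input w) (capacity K (length w)) (main_region B (length w))
                 (B * (length w + 1)) (0, zero_mem) c) \<and>
     (\<forall>w M i a. reach P U B K w M \<and> 1 \<le> i \<and> i \<le> length w \<longrightarrow>
         (\<exists>c. halts_within U (upd_input i a) (capacity K (length w)) (main_region B (length w))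
                 B (0, M) c)) \<and>
     (\<forall>w M. reach P U B K w M \<longrightarrow>
         enum_ok E (capacity K (length w)) (scratch_region B (length w))
                 B M (infixes L w)))"

definition arg_input :: "nat \<Rightarrow> nat \<Rightarrow> nat" where
  "arg_input x k = (if k = 0 then x else 0)"

inductive su_reach :: "instr list \<Rightarrow> instr list \<Rightarrow> instr list \<Rightarrow> instr list \<Rightarrow> instr list
                        \<Rightarrow> nat \<Rightarrow> nat \<Rightarrow> nat set \<Rightarrow> mem \<Rightarrow> bool"
  for Init T Ins Rem Q :: "instr list" and K n :: nat where
  init: "halts_within Init (arg_input n) (capacity K n) UNIV t (0, zero_mem) (pc, M)
           \<Longrightarrow> su_reach Init T Ins Rem Q K n {} M"
| ins: "su_reach Init T Ins Rem Q K n S M \<Longrightarrow> 1 \<le> i \<Longrightarrow> i \<le> n \<Longrightarrow>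
        halts_within Ins (arg_input i) (capacity K n) UNIV t (0, M) (pc, M')
          \<Longrightarrow> su_reach Init T Ins Rem Q K n (insert i S) M'"
| rem: "su_reach Init T Ins Rem Q K n S M \<Longrightarrow> 1 \<le> i \<Longrightarrow> i \<le> n \<Longrightarrow>
        halts_within Rem (arg_input i) (capacity K n) UNIV t (0, M) (pc, M')
          \<Longrightarrow> su_reach Init T Ins Rem Q K n (S - {i}) M'"
| tst: "su_reach Init T Ins Rem Q K n S M \<Longrightarrow> 1 \<le> i \<Longrightarrow> i \<le> n \<Longrightarrow>
        halts_within T (arg_input i) (capacity K n) UNIV t (0, M) (pc, M')
          \<Longrightarrow> su_reach Init T Ins Rem Q K n S M'"
| qry: "su_reach Init T Ins Rem Q K n S M \<Longrightarrow> 1 \<le> i \<Longrightarrow> i \<le> n \<Longrightarrow>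
        halts_within Q (arg_input i) (capacity K n) UNIV t (0, M) (pc, M')
          \<Longrightarrow> su_reach Init T Ins Rem Q K n S M'"

(* a prefix-U1 data structure whose operations take at most B steps, independently of n;
   answers of test/query are read from memory cell 0 (nonzero = yes) *)
definition prefix_U1_ds :: "instr list \<Rightarrow> instr list \<Rightarrow> instr list \<Rightarrow> instr list \<Rightarrow> instr list
                             \<Rightarrow> nat \<Rightarrow> nat \<Rightarrow> bool" where
  "prefix_U1_ds Init T Ins Rem Q B K =
     ((\<forall>n. \<exists>t c. halts_within Init (arg_input n) (capacity K n) UNIV t (0, zero_mem) c) \<and>
      (\<forall>n S M i. su_reach Init T Ins Rem Q K n S M \<and> 1 \<le> i \<and> i \<le> n \<longrightarrow>
         (\<exists>c. halts_within Ins (arg_input i) (capacity K n) UNIV B (0, M) c) \<and>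
         (\<exists>c. halts_within Rem (arg_input i) (capacity K n) UNIV B (0, M) c) \<and>
         (\<exists>pc M'. halts_within T (arg_input i) (capacity K n) UNIV B (0, M) (pc, M')
                  \<and> (M' 0 \<noteq> 0 \<longleftrightarrow> i \<in> S)) \<and>
         (\<exists>pc M'. halts_within Q (arg_input i) (capacity K n) UNIV B (0, M) (pc, M')
                  \<and> (M' 0 \<noteq> 0 \<longleftrightarrow> (\<forall>s\<in>S. i \<le> s)))))"

definition prefix_U1_hypothesis :: bool where
  "prefix_U1_hypothesis = (\<not> (\<exists>Init T Ins Rem Q B K. prefix_U1_ds Init T Ins Rem Q B K))"

end

theory Submission
  imports Defs
begin

(* Encode S \<subseteq> {1..n} by the word of length n whose j-th letter is b for j \<in> S and e otherwise,
   so that insertion and removal are letter updates. Writing a at position i creates an L1-infix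
   exactly when some b precedes position i, that is, when some element of S is smaller than i.
   Hence i \<le> min S is decided by updating position i to a, running the enumeration only up to its
   first output or its end (at most B steps), clearing the B scratch cells it may have written,
   and restoring the letter at position i: a constant number of steps. The prefix-U1 programs run
   the programs of the L1 structure by a block-wise simulation in a host memory that interleaves
   the simulated cells with registers and the membership bits of S; host cells of capacity
   (n + 2) ^ (K + B + 6) leave room for the address translation. *)

definition runs_within ::
    "instr list \<Rightarrow> (nat \<Rightarrow> nat) \<Rightarrow> nat \<Rightarrow> nat set \<Rightarrow> nat \<Rightarrow> conf \<Rightarrow> conf \<Rightarrow> bool" where
  "runs_within prog inp cap W n c c' \<longleftrightarrow> (\<exists>k\<le>n. \<exists>os. steps prog inp cap W k c = Some (c', os))"

lemma steps_halted: "halted prog c \<Longrightarrow> steps prog inp cap W k c = Some (c, [])"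
  by (cases k) auto

lemma halted_at_end: "halted prog (length prog, M)"
  by (simp add: halted_def)

lemma steps_numeral:
  "steps prog inp cap W (numeral k) c =
    (if halted prog c then Some (c, [])
     else case step prog inp cap W c of
       None \<Rightarrow> None
     | Some (c', os) \<Rightarrow> (case steps prog inp cap W (pred_numeral k) c' of
         None \<Rightarrow> None
       | Some (c'', os') \<Rightarrow> Some (c'', os @ os')))"
  by (simp add: numeral_eq_Suc)

(* normalises jump targets base + k to the Suc-chains of program counters produced by
   symbolic execution *)
lemma add_numeral_Suc: "n + numeral k = Suc (n + pred_numeral k)"
  by (simp add: numeral_eq_Suc)

lemma steps_add:
  "steps prog inp cap W (a + b) c =
    (case steps prog inp cap W a c of
      None \<Rightarrow> None
    | Some (c1, os1) \<Rightarrow> (case steps prog inp cap W b c1 of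
        None \<Rightarrow> None
      | Some (c2, os2) \<Rightarrow> Some (c2, os1 @ os2)))"
proof (induction a arbitrary: c)
  case 0
  show ?case by (auto split: option.split)
next
  case (Suc a)
  show ?case
    by (cases "halted prog c") (auto simp: steps_halted Suc.IH split: option.split prod.split)
qed

lemma steps_addE:
  assumes "steps prog inp cap W (a + b) c = Some (c2, os)"
  obtains c1 os1 os2 where "steps prog inp cap W a c = Some (c1, os1)"
    and "steps prog inp cap W b c1 = Some (c2, os2)" and "os = os1 @ os2"
  using assms by (auto simp: steps_add split: option.splits)

lemma runs_withinI:
  "steps prog inp cap W k c = Some (c', os) \<Longrightarrow> k \<le> n \<Longrightarrow> runs_within prog inp cap W n c c'"
  unfolding runs_within_def by blast

lemma runs_within_refl: "runs_within prog inp cap W n c c"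
  by (rule runs_withinI[of _ _ _ _ 0]) auto

lemma runs_within_mono:
  "runs_within prog inp cap W n c c' \<Longrightarrow> n \<le> m \<Longrightarrow> runs_within prog inp cap W m c c'"
  unfolding runs_within_def by (meson order_trans)

lemma runs_within_trans:
  assumes "runs_within prog inp cap W n1 c c1" and "runs_within prog inp cap W n2 c1 c2"
  shows "runs_within prog inp cap W (n1 + n2) c c2"
proof -
  obtain k1 os1 k2 os2 where "k1 \<le> n1" "steps prog inp cap W k1 c = Some (c1, os1)"
    and "k2 \<le> n2" "steps prog inp cap W k2 c1 = Some (c2, os2)"
    using assms unfolding runs_within_def by blast
  then show ?thesis by (intro runs_withinI[of _ _ _ _ "k1 + k2"]) (auto simp: steps_add)
qed

lemma halts_within_if_runs_within:
  "runs_within prog inp cap W n c c' \<Longrightarrow> halted prog c' \<Longrightarrow> n \<le> t \<Longrightarrow>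
    halts_within prog inp cap W t c c'"
  unfolding runs_within_def halts_within_def by (meson order_trans)

lemma halts_within_unique:
  assumes "halts_within prog inp cap W t c c1" and "runs_within prog inp cap W n c c2"
    and "halted prog c2"
  shows "c1 = c2"
proof -
  obtain k1 os1 k2 os2 where 1: "steps prog inp cap W k1 c = Some (c1, os1)" "halted prog c1"
    and 2: "steps prog inp cap W k2 c = Some (c2, os2)"
    using assms unfolding halts_within_def runs_within_def by blast
  show ?thesis
  proof (cases "k1 \<le> k2")
    case True
    have "steps prog inp cap W (k1 + (k2 - k1)) c = Some (c1, os1)"
      using 1 by (simp add: steps_add steps_halted)
    with True 2 show ?thesis by simp
  next
    case False
    have "steps prog inp cap W (k2 + (k1 - k2)) c = Some (c2, os2)"
      using 2 \<open>halted prog c2\<close> by (simp add: steps_add steps_halted)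
    with False 1 show ?thesis by simp
  qed
qed

lemma steps_SucE:
  assumes "steps prog inp cap W (Suc k) c = Some (c2, os)" and "\<not> halted prog c"
  obtains c1 os1 os2 where "step prog inp cap W c = Some (c1, os1)"
    and "steps prog inp cap W k c1 = Some (c2, os2)" and "os = os1 @ os2"
  using assms by (auto split: option.splits)

lemma steps_invariant:
  assumes "steps prog inp cap W k (pc, M) = Some ((pc2, M2), os)" and "Q M"
    and "\<And>pc M pc' M' os. step prog inp cap W (pc, M) = Some ((pc', M'), os) \<Longrightarrow> Q M \<Longrightarrow> Q M'"
  shows "Q M2"
  using assms(1,2)
proof (induction k arbitrary: pc M os)
  case (Suc k)
  show ?case
  proof (cases "halted prog (pc, M)")
    case False
    with Suc.prems(1) obtain pc1 M1 os1 os2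
      where "step prog inp cap W (pc, M) = Some ((pc1, M1), os1)"
      and "steps prog inp cap W k (pc1, M1) = Some ((pc2, M2), os2)"
      by (elim steps_SucE) auto
    then show ?thesis using Suc.IH assms(3) Suc.prems(2) by blast
  qed (use Suc.prems in auto)
qed simp

lemma steps_unwritable:
  "steps prog inp cap W k (pc, M) = Some ((pc2, M2), os) \<Longrightarrow> x \<notin> W \<Longrightarrow> M2 x = M x"
  by (erule steps_invariant[where Q = "\<lambda>M'. M' x = M x"])
    (auto simp: step_def wr_def split: instr.splits if_splits)

definition mem_bounded :: "nat \<Rightarrow> mem \<Rightarrow> bool" where
  "mem_bounded cap M \<longleftrightarrow> (\<forall>x. M x < cap)"

lemma steps_mem_bounded:
  "steps prog inp cap W k (pc, M) = Some ((pc2, M2), os) \<Longrightarrow> mem_bounded cap M \<Longrightarrow>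
    mem_bounded cap M2"
  by (erule steps_invariant)
    (auto simp: step_def wr_def mem_bounded_def split: instr.splits if_splits)

definition code_at :: "instr list \<Rightarrow> nat \<Rightarrow> instr list \<Rightarrow> bool" where
  "code_at prog pc xs \<longleftrightarrow> pc + length xs \<le> length prog \<and> (\<forall>j<length xs. prog ! (pc + j) = xs ! j)"

lemma code_at_Nil [simp]: "code_at prog pc [] \<longleftrightarrow> pc \<le> length prog"
  by (simp add: code_at_def)

lemma code_at_Cons [simp]:
  "code_at prog pc (x # xs) \<longleftrightarrow> pc < length prog \<and> prog ! pc = x \<and> code_at prog (Suc pc) xs"
  by (auto simp: code_at_def less_Suc_eq_0_disj)

lemma code_at_length: "code_at prog pc xs \<Longrightarrow> pc + length xs \<le> length prog"
  by (simp add: code_at_def)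

lemma code_at_append:
  "code_at prog pc (xs @ ys) \<longleftrightarrow> code_at prog pc xs \<and> code_at prog (pc + length xs) ys"
  by (induction xs arbitrary: pc) (auto dest: code_at_length)

lemma code_at_append_left: "code_at ys q zs \<Longrightarrow> code_at (xs @ ys) (length xs + q) zs"
  by (auto simp: code_at_def nth_append)

lemma code_at_append_right: "code_at xs q zs \<Longrightarrow> code_at (xs @ ys) q zs"
  by (auto simp: code_at_def nth_append)

lemma code_at_self: "code_at prog 0 prog"
  by (simp add: code_at_def)

lemma code_at_trans: "code_at prog pc xs \<Longrightarrow> code_at xs q ys \<Longrightarrow> code_at prog (pc + q) ys"
  by (auto simp: code_at_def add.assoc)

lemma code_at_middle: "length xs = pc \<Longrightarrow> code_at (xs @ ys @ zs) pc ys"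
  using code_at_append_left[of "ys @ zs" 0 ys xs] code_at_append_right[OF code_at_self, of ys zs]
  by simp

lemma code_at_concat:
  "(\<And>xs. xs \<in> set xss \<Longrightarrow> length xs = d) \<Longrightarrow> p < length xss \<Longrightarrow> code_at (concat xss) (p * d) (xss ! p)"
proof (induction xss arbitrary: p)
  case (Cons xs xss)
  then show ?case
    using code_at_append_left[of "concat xss" _ _ xs] code_at_append_right[OF code_at_self]
    by (cases p) auto
qed simp

section \<open>Block-wise simulation of a program\<close>

abbreviation reg_ans :: nat where "reg_ans \<equiv> 0"
abbreviation reg_zero :: nat where "reg_zero \<equiv> 1"
abbreviation reg_tmp :: nat where "reg_tmp \<equiv> 2"
abbreviation reg_offset :: nat where "reg_offset \<equiv> 3"
abbreviation reg_one :: nat where "reg_one \<equiv> 4"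
abbreviation reg_inp_len :: nat where "reg_inp_len \<equiv> 5"
abbreviation reg_inp0 :: nat where "reg_inp0 \<equiv> 6"
abbreviation reg_inp_mid :: nat where "reg_inp_mid \<equiv> 7"
abbreviation reg_inp_last :: nat where "reg_inp_last \<equiv> 8"
abbreviation reg_flag :: nat where "reg_flag \<equiv> 9"
abbreviation reg_n :: nat where "reg_n \<equiv> 10"
abbreviation reg_arg :: nat where "reg_arg \<equiv> 11"
abbreviation reg_tmp2 :: nat where "reg_tmp2 \<equiv> 12"
abbreviation reg_scratch :: nat where "reg_scratch \<equiv> 13"

(* Host memory layout: addresses below 14 are registers, simulated cell x lives at the even
   address sim_addr x, and the odd address sim_addr j + 1 is free (it will hold the membership
   bit of j). reg_offset holds 14 so that compiled code can compute sim_addr of a pointer. *)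
definition sim_addr :: "nat \<Rightarrow> nat" where
  "sim_addr x = 2 * x + 14"

definition ctrl_cells :: "nat set" where
  "ctrl_cells = {a. a < 14 \<or> odd a}"

lemma reg_ctrl [simp]: "a < 14 \<Longrightarrow> a \<in> ctrl_cells"
  by (simp add: ctrl_cells_def)

lemma sim_addr_not_ctrl [simp]: "sim_addr x \<notin> ctrl_cells"
  by (simp add: sim_addr_def ctrl_cells_def)

lemma sim_addr_inject [simp]: "sim_addr x = sim_addr y \<longleftrightarrow> x = y"
  by (simp add: sim_addr_def)

lemma sim_addr_neq_reg [simp]: "a < 14 \<Longrightarrow> sim_addr x \<noteq> a" "a < 14 \<Longrightarrow> a \<noteq> sim_addr x"
  by (simp_all add: sim_addr_def)

lemma Suc_sim_addr_ctrl [simp]: "Suc (sim_addr x) \<in> ctrl_cells"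
  by (simp add: ctrl_cells_def sim_addr_def)

definition agree_on :: "nat set \<Rightarrow> mem \<Rightarrow> mem \<Rightarrow> bool" where
  "agree_on A M M' \<longleftrightarrow> (\<forall>a\<in>A. M' a = M a)"

lemma agree_on_refl [simp]: "agree_on A M M"
  by (simp add: agree_on_def)

lemma agree_on_trans: "agree_on A M1 M2 \<Longrightarrow> agree_on A M2 M3 \<Longrightarrow> agree_on A M1 M3"
  by (simp add: agree_on_def)

lemma agree_on_subset: "agree_on A M M' \<Longrightarrow> B \<subseteq> A \<Longrightarrow> agree_on B M M'"
  by (auto simp: agree_on_def)

lemma agree_on_upd [simp]: "a \<notin> A \<Longrightarrow> agree_on A M (M'(a := v)) \<longleftrightarrow> agree_on A M M'"
  by (auto simp: agree_on_def)

lemma agree_onD: "agree_on A M M' \<Longrightarrow> a \<in> A \<Longrightarrow> M' a = M a"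
  by (simp add: agree_on_def)

(* Every input a simulated program is given below, word_input (replicate n SE) and
   upd_input i a, has this shape, so four registers suffice to simulate it. *)
definition sim_input :: "mem \<Rightarrow> nat \<Rightarrow> nat" where
  "sim_input M' v =
    (if v = 0 then M' reg_inp0 else if v \<le> M' reg_inp_len then M' reg_inp_mid
     else if v = Suc (M' reg_inp_len) then M' reg_inp_last else 0)"

definition sim_mem :: "mem \<Rightarrow> mem \<Rightarrow> bool" where
  "sim_mem M M' \<longleftrightarrow> (\<forall>x. M' (sim_addr x) = M x)"

definition sim_regs :: "(nat \<Rightarrow> nat) \<Rightarrow> mem \<Rightarrow> bool" where
  "sim_regs inp M' \<longleftrightarrow>
     M' reg_zero = 0 \<and> M' reg_offset = 14 \<and> M' reg_one = 1 \<and> (\<forall>v. inp v = sim_input M' v)"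

lemma sim_mem_upd_ctrl [simp]: "a \<in> ctrl_cells \<Longrightarrow> sim_mem M (M'(a := v)) \<longleftrightarrow> sim_mem M M'"
proof -
  assume "a \<in> ctrl_cells"
  then have "sim_addr x \<noteq> a" for x
    using sim_addr_not_ctrl by metis
  then show ?thesis by (simp add: sim_mem_def)
qed

lemma sim_mem_upd [simp]: "sim_mem M M' \<Longrightarrow> sim_mem (M(x := v)) (M'(sim_addr x := v))"
  by (simp add: sim_mem_def)

lemma sim_regs_agree:
  "sim_regs inp M1 \<Longrightarrow> agree_on (ctrl_cells - {reg_tmp, reg_flag}) M1 M2 \<Longrightarrow> sim_regs inp M2"
  by (simp add: sim_regs_def agree_on_def sim_input_def ctrl_cells_def)

definition block_len :: nat where
  "block_len = 13"

(* base is the address of the block itself, the target of the branches of Inp. With out_exits,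
   Out raises reg_flag and leaves the program: this is how the enumeration is stopped at its
   first output. *)
definition compile_instr :: "nat \<Rightarrow> nat \<Rightarrow> nat \<Rightarrow> bool \<Rightarrow> (nat \<Rightarrow> nat) \<Rightarrow> instr \<Rightarrow> instr list" where
  "compile_instr base nxt ex out_exits tgt ins = (case ins of
     Const a v \<Rightarrow> [Const (sim_addr a) v, Jz reg_zero nxt]
   | Add a b d \<Rightarrow> [Add (sim_addr a) (sim_addr b) (sim_addr d), Jz reg_zero nxt]
   | Sub a b d \<Rightarrow> [Sub (sim_addr a) (sim_addr b) (sim_addr d), Jz reg_zero nxt]
   | Mul a b d \<Rightarrow> [Mul (sim_addr a) (sim_addr b) (sim_addr d), Jz reg_zero nxt]
   | Div a b d \<Rightarrow> [Div (sim_addr a) (sim_addr b) (sim_addr d), Jz reg_zero nxt]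
   | Load a b \<Rightarrow> [Add reg_tmp (sim_addr b) (sim_addr b), Add reg_tmp reg_tmp reg_offset,
                  Load (sim_addr a) reg_tmp, Jz reg_zero nxt]
   | Store a b \<Rightarrow> [Add reg_tmp (sim_addr a) (sim_addr a), Add reg_tmp reg_tmp reg_offset,
                   Store reg_tmp (sim_addr b), Jz reg_zero nxt]
   | Inp a b \<Rightarrow> [Jz (sim_addr b) (base + 7), Sub reg_tmp (sim_addr b) reg_inp_len,
                 Jz reg_tmp (base + 9), Sub reg_tmp reg_tmp reg_one, Jz reg_tmp (base + 11),
                 Const (sim_addr a) 0, Jz reg_zero nxt,
                 Add (sim_addr a) reg_inp0 reg_zero, Jz reg_zero nxt,
                 Add (sim_addr a) reg_inp_mid reg_zero, Jz reg_zero nxt,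
                 Add (sim_addr a) reg_inp_last reg_zero, Jz reg_zero nxt]
   | Jz a l \<Rightarrow> [Jz (sim_addr a) (tgt l), Jz reg_zero nxt]
   | Out a b \<Rightarrow> (if out_exits then [Const reg_flag 1, Jz reg_zero ex] else [Jz reg_zero nxt])
   | Halt \<Rightarrow> [Jz reg_zero ex])"

lemma length_compile_instr: "length (compile_instr base nxt ex out_exits tgt ins) \<le> block_len"
  by (cases ins) (auto simp: compile_instr_def block_len_def)

definition target_pc :: "nat \<Rightarrow> instr list \<Rightarrow> nat \<Rightarrow> nat" where
  "target_pc off orig q = off + min q (length orig) * block_len"

definition compile_block :: "nat \<Rightarrow> bool \<Rightarrow> instr list \<Rightarrow> nat \<Rightarrow> instr list" where
  "compile_block off out_exits orig p =
    compile_instr (off + p * block_len) (target_pc off orig (Suc p))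
      (target_pc off orig (length orig)) out_exits (target_pc off orig) (orig ! p)"

definition pad_block :: "instr list \<Rightarrow> instr list" where
  "pad_block xs = xs @ replicate (block_len - length xs) Halt"

definition compile_prog :: "nat \<Rightarrow> bool \<Rightarrow> instr list \<Rightarrow> instr list" where
  "compile_prog off out_exits orig =
    concat (map (\<lambda>p. pad_block (compile_block off out_exits orig p)) [0..<length orig])"

lemma length_pad_block [simp]: "length (pad_block (compile_block off out_exits orig p)) = block_len"
  using length_compile_instr by (simp add: pad_block_def compile_block_def)

lemma length_compile_prog [simp]:
  "length (compile_prog off out_exits orig) = length orig * block_len"
  by (simp add: compile_prog_def length_concat comp_def sum_list_triv)

lemma code_at_compile_block:
  assumes "code_at prog off (compile_prog off out_exits orig)" and "p < length orig"
  shows "code_at prog (off + p * block_len) (compile_block off out_exits orig p)"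
proof -
  let ?blocks = "map (\<lambda>p. pad_block (compile_block off out_exits orig p)) [0..<length orig]"
  have "code_at (concat ?blocks) (p * block_len) (?blocks ! p)"
    by (rule code_at_concat) (use assms(2) in auto)
  then have "code_at (compile_prog off out_exits orig) (p * block_len)
      (pad_block (compile_block off out_exits orig p))"
    using assms(2) by (simp add: compile_prog_def)
  then have "code_at (compile_prog off out_exits orig) (p * block_len)
      (compile_block off out_exits orig p)"
    unfolding pad_block_def code_at_append by blast
  then show ?thesis
    by (rule code_at_trans[OF assms(1)])
qed

lemma steps_compile_Inp:
  assumes code: "code_at prog base (compile_instr base nxt ex out_exits tgt (Inp a b))"
    and regs: "M' reg_zero = 0" "M' reg_one = 1"
    and small: "M' (sim_addr b) < cap'" "sim_input M' (M' (sim_addr b)) < cap'" "Suc 0 < cap'"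
  shows "\<exists>k t. k \<le> 7 \<and> steps prog inp cap' UNIV k (base, M') =
           Some ((nxt, M'(reg_tmp := t, sim_addr a := sim_input M' (M' (sim_addr b)))), [])"
proof -
  note exec = regs regs(1)[simplified] compile_instr_def step_def wr_def halted_def steps_numeral
    sim_input_def add_numeral_Suc less_imp_diff_less
  consider "M' (sim_addr b) = 0" | "0 < M' (sim_addr b)" "M' (sim_addr b) \<le> M' reg_inp_len"
    | "M' (sim_addr b) = Suc (M' reg_inp_len)" | "Suc (M' reg_inp_len) < M' (sim_addr b)"
    by linarith
  then show ?thesis
  proof cases
    case 1
    from code this small show ?thesis
      by (intro exI[of _ 3] exI[of _ "M' reg_tmp"]) (simp add: exec)
  next
    case 2
    from code this small show ?thesis
      by (intro exI[of _ 5] exI[of _ 0]) (simp add: exec)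
  next
    case 3
    from code this small show ?thesis
      by (intro exI[of _ 7] exI[of _ 0]) (simp add: exec)
  next
    case 4
    from code this small show ?thesis
      by (intro exI[of _ 7] exI[of _ "M' (sim_addr b) - M' reg_inp_len - 1"]) (simp add: exec)
  qed
qed

lemma sim_step:
  assumes code: "code_at prog off (compile_prog off out_exits orig)"
    and running: "\<not> halted orig (pc, M)"
    and step: "step orig inp cap W (pc, M) = Some ((pc2, M2), os)"
    and silent: "out_exits \<longrightarrow> os = []"
    and sim: "sim_mem M M'" and regs: "sim_regs inp M'" and bounded: "mem_bounded cap M"
    and cap: "\<forall>v<cap. 2 * v + 15 < cap'"
  shows "\<exists>M2'. runs_within prog inp' cap' UNIV block_len
              (target_pc off orig pc, M') (target_pc off orig pc2, M2')
           \<and> sim_mem M2 M2' \<and> agree_on (ctrl_cells - {reg_tmp}) M' M2'"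
proof -
  have pc: "pc < length orig" and not_halt: "orig ! pc \<noteq> Halt"
    using running by (auto simp: halted_def)
  define base where "base = off + pc * block_len"
  define nxt where "nxt = target_pc off orig (Suc pc)"
  have blk: "code_at prog base (compile_instr base nxt (off + length orig * block_len) out_exits
      (target_pc off orig) (orig ! pc))"
    using code_at_compile_block[OF code pc]
    by (simp add: compile_block_def base_def nxt_def target_pc_def)
  have M': "\<And>x. M' (sim_addr x) = M x" "M' reg_zero = 0" "M' (Suc 0) = 0" "M' reg_offset = 14"
    "M' reg_one = 1"
    "\<And>v. inp v = sim_input M' v"
    using sim regs by (auto simp: sim_mem_def sim_regs_def)
  have M_small: "\<And>x. 2 * M x + 15 < cap'"
    using cap bounded by (simp add: mem_bounded_def)
  have addr_small: "sim_addr (M x) < cap'" "M x + M x < cap'" "M x < cap'" "Suc 0 < cap'" for x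
    using M_small[of x] by (simp_all add: sim_addr_def)
  have cap_small: "\<And>v. v < cap \<Longrightarrow> v < cap'"
    using cap by fastforce
  have finish: ?thesis
    if "steps prog inp' cap' UNIV k (base, M') = Some ((target_pc off orig pc2, M2'), [])"
      "k \<le> block_len"
      "sim_mem M2 M2'" "agree_on (ctrl_cells - {reg_tmp}) M' M2'" for k M2'
    using that runs_withinI[OF that(1,2)] pc by (auto simp: base_def target_pc_def)
  note exec = M' M_small addr_small cap_small sim nxt_def sim_addr_def[symmetric] compile_instr_def
    step_def wr_def halted_def block_len_def steps_numeral
  show ?thesis
  proof (cases "orig ! pc")
    case (Const a v)
    from Const blk step show ?thesis
      by (intro finish[of 2 "M'(sim_addr a := v)"]) (auto simp: exec split: if_splits)
  next
    case (Add a b d)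
    from Add blk step show ?thesis
      by (intro finish[of 2 "M'(sim_addr a := M b + M d)"]) (auto simp: exec split: if_splits)
  next
    case (Sub a b d)
    from Sub blk step show ?thesis
      by (intro finish[of 2 "M'(sim_addr a := M b - M d)"]) (auto simp: exec split: if_splits)
  next
    case (Mul a b d)
    from Mul blk step show ?thesis
      by (intro finish[of 2 "M'(sim_addr a := M b * M d)"]) (auto simp: exec split: if_splits)
  next
    case (Div a b d)
    from Div blk step show ?thesis
      by (intro finish[of 2 "M'(sim_addr a := M b div M d)"]) (auto simp: exec split: if_splits)
  next
    case (Load a b)
    from Load blk step show ?thesis
      by (intro finish[of 4 "M'(reg_tmp := sim_addr (M b), sim_addr a := M (M b))"])
        (auto simp: exec split: if_splits)
  next
    case (Store a b)
    from Store blk step show ?thesis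
      by (intro finish[of 4 "M'(reg_tmp := sim_addr (M a), sim_addr (M a) := M b)"])
        (auto simp: exec split: if_splits)
  next
    case (Jz a l)
    with step have "pc2 = (if M a = 0 then l else Suc pc)" "M2 = M"
      by (auto simp: step_def)
    with Jz blk show ?thesis
      by (cases "M a = 0") (rule finish[of 1 M'] finish[of 2 M']; simp add: exec)+
  next
    case (Out a b)
    from Out blk step silent sim show ?thesis
      by (intro finish[of 1 M']) (auto simp: exec split: if_splits)
  next
    case (Inp a b)
    with step have "sim_input M' (M b) < cap" "pc2 = Suc pc" "M2 = M(a := sim_input M' (M b))"
      by (auto simp: step_def wr_def M' split: if_splits)
    moreover have "M' (sim_addr b) < cap'" "sim_input M' (M' (sim_addr b)) < cap'"
      using calculation(1) addr_small(3) cap_small by (simp_all add: M'(1))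
    then obtain k t where "k \<le> 7" "steps prog inp' cap' UNIV k (base, M') =
        Some ((nxt, M'(reg_tmp := t, sim_addr a := sim_input M' (M b))), [])"
      using steps_compile_Inp[where inp = inp', OF blk[unfolded Inp] M'(2,5) _ _ addr_small(4)]
      by (auto simp: M'(1))
    ultimately show ?thesis
      by (intro finish[of k "M'(reg_tmp := t, sim_addr a := sim_input M' (M b))"])
        (simp_all add: nxt_def block_len_def sim)
  qed (use not_halt in simp)
qed

lemma sim_steps:
  assumes code: "code_at prog off (compile_prog off out_exits orig)"
    and cap: "\<forall>v<cap. 2 * v + 15 < cap'"
  shows "steps orig inp cap W k (pc, M) = Some ((pc2, M2), os) \<Longrightarrow> (out_exits \<longrightarrow> os = []) \<Longrightarrow>
    sim_mem M M' \<Longrightarrow> sim_regs inp M' \<Longrightarrow> mem_bounded cap M \<Longrightarrow>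
    \<exists>M2'. runs_within prog inp' cap' UNIV (k * block_len)
             (target_pc off orig pc, M') (target_pc off orig pc2, M2')
      \<and> sim_mem M2 M2' \<and> agree_on (ctrl_cells - {reg_tmp}) M' M2'"
proof (induction k arbitrary: pc M M' os)
  case 0
  then show ?case by (auto intro: runs_within_refl)
next
  case (Suc k)
  show ?case
  proof (cases "halted orig (pc, M)")
    case True
    with Suc.prems show ?thesis by (auto intro: runs_within_refl)
  next
    case False
    with Suc.prems(1) obtain pc1 M1 os1 os2
      where st: "step orig inp cap W (pc, M) = Some ((pc1, M1), os1)"
      and sts: "steps orig inp cap W k (pc1, M1) = Some ((pc2, M2), os2)" and os: "os = os1 @ os2"
      by (elim steps_SucE) auto
    obtain M1' where run1: "runs_within prog inp' cap' UNIV block_len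
        (target_pc off orig pc, M') (target_pc off orig pc1, M1')"
      and sim1: "sim_mem M1 M1'" and agree1: "agree_on (ctrl_cells - {reg_tmp}) M' M1'"
      using sim_step[OF code False st _ Suc.prems(3,4,5) cap] Suc.prems(2) os by auto
    have "sim_regs inp M1'"
      using sim_regs_agree[OF Suc.prems(4) agree_on_subset[OF agree1]] by auto
    moreover have "mem_bounded cap M1"
      using steps_mem_bounded[of orig inp cap W 1 pc M pc1 M1 os1] st False Suc.prems(5) by simp
    ultimately obtain M2' where "runs_within prog inp' cap' UNIV (k * block_len)
        (target_pc off orig pc1, M1') (target_pc off orig pc2, M2')"
      "sim_mem M2 M2'" "agree_on (ctrl_cells - {reg_tmp}) M1' M2'"
      using Suc.IH[OF sts _ sim1] Suc.prems(2) os by auto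
    with run1 agree1 show ?thesis
      by (auto dest: runs_within_trans intro: agree_on_trans simp: add.commute)
  qed
qed

lemma sim_exit:
  assumes code: "code_at prog off (compile_prog off out_exits orig)"
    and halt: "halted orig (pc, M)" and zero: "M' reg_zero = 0"
  shows "runs_within prog inp cap' UNIV 1
           (target_pc off orig pc, M') (off + length orig * block_len, M')"
proof (cases "pc < length orig")
  case False
  then show ?thesis by (simp add: target_pc_def runs_within_refl)
next
  case True
  with halt have "orig ! pc = Halt" by (simp add: halted_def)
  then have "code_at prog (off + pc * block_len) [Jz reg_zero (off + length orig * block_len)]"
    using code_at_compile_block[OF code True]
    by (simp add: compile_block_def compile_instr_def target_pc_def)
  with True zero show ?thesis
    by (intro runs_withinI[of _ _ _ _ "Suc 0" _ _ "[]"])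
      (auto simp: target_pc_def halted_def step_def)
qed

lemma sim_exit_on_output:
  assumes code: "code_at prog off (compile_prog off True orig)"
    and pc: "pc < length orig" and out: "orig ! pc = Out a b"
    and zero: "M' reg_zero = 0" and cap: "1 < cap'"
  shows "runs_within prog inp cap' UNIV 2
           (target_pc off orig pc, M') (off + length orig * block_len, M'(reg_flag := 1))"
proof -
  have "code_at prog (off + pc * block_len)
      [Const reg_flag 1, Jz reg_zero (off + length orig * block_len)]"
    using code_at_compile_block[OF code pc] out
    by (simp add: compile_block_def compile_instr_def target_pc_def)
  with pc zero cap show ?thesis
    by (intro runs_withinI[of _ _ _ _ 2 _ _ "[]"])
      (auto simp: target_pc_def halted_def step_def wr_def steps_numeral)
qed

lemma sim_halting_run:
  assumes code: "code_at prog off (compile_prog off False orig)"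
    and cap: "\<forall>v<cap. 2 * v + 15 < cap'"
    and halts: "halts_within orig inp cap W t (0, M) (pc, M2)"
    and sim: "sim_mem M M'" and regs: "sim_regs inp M'" and bounded: "mem_bounded cap M"
  shows "\<exists>M2'. runs_within prog inp' cap' UNIV (t * block_len + 1)
              (off, M') (off + length orig * block_len, M2')
           \<and> sim_mem M2 M2' \<and> agree_on (ctrl_cells - {reg_tmp}) M' M2'"
proof -
  obtain k os where k: "k \<le> t" and sts: "steps orig inp cap W k (0, M) = Some ((pc, M2), os)"
    and halt: "halted orig (pc, M2)"
    using halts unfolding halts_within_def by blast
  obtain M2' where run: "runs_within prog inp' cap' UNIV (k * block_len)
      (target_pc off orig 0, M') (target_pc off orig pc, M2')"
    and sim2: "sim_mem M2 M2'" and agree: "agree_on (ctrl_cells - {reg_tmp}) M' M2'"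
    using sim_steps[OF code cap sts _ sim regs bounded] by auto
  have "M2' reg_zero = 0"
    using regs agree_onD[OF agree, of reg_zero] by (simp add: sim_regs_def)
  then have "runs_within prog inp' cap' UNIV (k * block_len + 1)
      (off, M') (off + length orig * block_len, M2')"
    using runs_within_trans[OF run sim_exit[OF code halt]] by (simp add: target_pc_def)
  moreover have "k * block_len + 1 \<le> t * block_len + 1"
    using k by simp
  ultimately show ?thesis
    using sim2 agree runs_within_mono by blast
qed

section \<open>Stopping an enumeration at its first output\<close>

lemma step_output_Out:
  "step prog inp cap W (pc, M) = Some (c', os) \<Longrightarrow> os \<noteq> [] \<Longrightarrow> \<exists>a b. prog ! pc = Out a b"
  by (auto simp: step_def wr_def split: instr.splits if_splits)

lemma enum_ok_first_event_time:
  assumes enum: "enum_ok E cap W B M S"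
  obtains d c os
  where "d \<le> B" "steps E (\<lambda>_. 0) cap W d (0, M) = Some (c, os)" "os \<noteq> [] \<or> halted E c"
    and "\<And>d' c' os'. d' < d \<Longrightarrow> steps E (\<lambda>_. 0) cap W d' (0, M) = Some (c', os') \<Longrightarrow>
           os' = [] \<and> \<not> halted E c'"
proof -
  let ?steps = "\<lambda>d. steps E (\<lambda>_. 0) cap W d (0, M)"
  define event where "event d \<longleftrightarrow> (\<exists>c os. ?steps d = Some (c, os) \<and> (os \<noteq> [] \<or> halted E c))" for d
  have "\<exists>d\<le>B. event d"
  proof (cases "halted E (0, M)")
    case False
    have "?steps 0 = Some ((0, M), []) \<and> \<not> halted E (0, M) \<longrightarrow>
      (\<exists>d. 1 \<le> d \<and> d \<le> B \<and> (\<exists>c' os'. ?steps (0 + d) = Some (c', os')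
         \<and> (length ([] :: (nat \<times> nat) list) < length os' \<or> halted E c')))"
      using conjunct2[OF enum[unfolded enum_ok_def], rule_format, of 0 "(0, M)" "[]"] by simp
    with False show ?thesis
      unfolding event_def by force
  qed (auto simp: event_def)
  then obtain d0 where d0: "d0 \<le> B" "event d0" by blast
  define d where "d = (LEAST d. event d)"
  have "event d" and before: "\<And>d'. d' < d \<Longrightarrow> \<not> event d'"
    unfolding d_def using LeastI[of event, OF d0(2)] not_less_Least by auto
  moreover have "d \<le> B"
    unfolding d_def using Least_le[of event, OF d0(2)] d0(1) by linarith
  ultimately show thesis
    using that unfolding event_def by blast
qed

lemma enum_ok_first_event:
  assumes enum: "enum_ok E cap W B M S"
  obtains (no_output) k pc M2 where "k \<le> B" "steps E (\<lambda>_. 0) cap W k (0, M) = Some ((pc, M2), [])"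
      "halted E (pc, M2)" "S = {}"
    | (first_output) k pc M2 a b
      where "k < B" "steps E (\<lambda>_. 0) cap W k (0, M) = Some ((pc, M2), [])"
      "\<not> halted E (pc, M2)" "E ! pc = Out a b" "S \<noteq> {}"
proof -
  let ?steps = "\<lambda>d. steps E (\<lambda>_. 0) cap W d (0, M)"
  obtain d c os where d: "d \<le> B" "?steps d = Some (c, os)" "os \<noteq> [] \<or> halted E c"
    and before: "\<And>d' c' os'. d' < d \<Longrightarrow> ?steps d' = Some (c', os') \<Longrightarrow> os' = [] \<and> \<not> halted E c'"
    using enum_ok_first_event_time[OF enum] by blast
  obtain kf cf osf where fin: "?steps kf = Some (cf, osf)" "halted E cf" "set osf = S"
    using enum unfolding enum_ok_def by blast
  have "d \<le> kf"
    using before[of kf] fin by fastforce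
  then have "?steps (d + (kf - d)) = Some (cf, osf)"
    using fin by simp
  then obtain os2 where osf: "osf = os @ os2"
    and rest: "steps E (\<lambda>_. 0) cap W (kf - d) c = Some (cf, os2)"
    using d(2) by (elim steps_addE) auto
  show thesis
  proof (cases "os = []")
    case True
    with d have "halted E c" by simp
    with rest have "os2 = []" by (simp add: steps_halted)
    with True d fin osf show thesis
      by (intro no_output[of d "fst c" "snd c"]) auto
  next
    case False
    with d(2) obtain d' where d': "d = Suc d'" by (cases d) auto
    with d(2) have "?steps (d' + Suc 0) = Some (c, os)" by simp
    then obtain c1 os1 osx where st1: "?steps d' = Some (c1, os1)"
      and st2: "steps E (\<lambda>_. 0) cap W (Suc 0) c1 = Some (c, osx)" and "os = os1 @ osx"
      by (rule steps_addE)
    moreover have "os1 = []" "\<not> halted E c1"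
      using before[of d'] st1 d' by auto
    moreover obtain pc1 M1 where "c1 = (pc1, M1)" by (cases c1)
    ultimately have "step E (\<lambda>_. 0) cap W (pc1, M1) = Some (c, osx)" "osx \<noteq> []"
      using False by (auto split: option.splits)
    then obtain a b where "E ! pc1 = Out a b"
      using step_output_Out by blast
    with \<open>os1 = []\<close> \<open>\<not> halted E c1\<close> st1 \<open>c1 = (pc1, M1)\<close> d' d False fin osf show thesis
      by (intro first_output[of d' pc1 M1 a b]) auto
  qed
qed

lemma sim_enum_probe:
  assumes code: "code_at prog off (compile_prog off True E)"
    and cap: "\<forall>v<cap. 2 * v + 15 < cap'"
    and enum: "enum_ok E cap W B M S"
    and sim: "sim_mem M M'" and regs: "sim_regs (\<lambda>_. 0) M'" and bounded: "mem_bounded cap M"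
    and flag: "M' reg_flag = 0"
  shows "\<exists>ME ME'. runs_within prog inp' cap' UNIV (B * block_len + 2)
              (off, M') (off + length E * block_len, ME')
           \<and> sim_mem ME ME' \<and> agree_on (ctrl_cells - {reg_tmp, reg_flag}) M' ME'
           \<and> (\<forall>x. x \<notin> W \<longrightarrow> ME x = M x) \<and> (ME' reg_flag \<noteq> 0 \<longleftrightarrow> S \<noteq> {})"
proof -
  have zero: "M' reg_zero = 0"
    using regs by (simp add: sim_regs_def)
  from enum show ?thesis
  proof (cases rule: enum_ok_first_event)
    case (no_output k pc M2)
    obtain M2' where run: "runs_within prog inp' cap' UNIV (k * block_len)
        (off, M') (target_pc off E pc, M2')"
      and sim2: "sim_mem M2 M2'" and agree: "agree_on (ctrl_cells - {reg_tmp}) M' M2'"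
      using sim_steps[OF code cap no_output(2) _ sim regs bounded] by (auto simp: target_pc_def)
    have "M2' reg_zero = 0" "M2' reg_flag = 0"
      using agree_onD[OF agree, of reg_zero] agree_onD[OF agree, of reg_flag] zero flag by auto
    then have "runs_within prog inp' cap' UNIV (k * block_len + 1)
        (off, M') (off + length E * block_len, M2')"
      using runs_within_trans[OF run sim_exit[OF code no_output(3)]] by simp
    moreover have "k * block_len + 1 \<le> B * block_len + 2"
      using mult_le_mono1[OF no_output(1), of block_len] by linarith
    ultimately show ?thesis
      using sim2 agree_on_subset[OF agree] steps_unwritable[OF no_output(2)] no_output(4)
        \<open>M2' reg_flag = 0\<close>
      by (blast intro: runs_within_mono)
  next
    case (first_output k pc M2 a b)
    obtain M2' where run: "runs_within prog inp' cap' UNIV (k * block_len)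
        (off, M') (target_pc off E pc, M2')"
      and sim2: "sim_mem M2 M2'" and agree: "agree_on (ctrl_cells - {reg_tmp}) M' M2'"
      using sim_steps[OF code cap first_output(2) _ sim regs bounded] by (auto simp: target_pc_def)
    have "1 < cap'"
      using bounded cap by (auto simp: mem_bounded_def)
    moreover have "M2' reg_zero = 0"
      using agree_onD[OF agree, of reg_zero] zero by auto
    moreover have "pc < length E"
      using first_output(3) by (simp add: halted_def)
    ultimately have "runs_within prog inp' cap' UNIV (k * block_len + 2)
        (off, M') (off + length E * block_len, M2'(reg_flag := 1))"
      using runs_within_trans[OF run sim_exit_on_output[OF code _ first_output(4)]] by simp
    moreover have "k * block_len + 2 \<le> B * block_len + 2"
      using mult_le_mono1[of k B block_len] first_output(1) by linarith
    moreover have "agree_on (ctrl_cells - {reg_tmp, reg_flag}) M' (M2'(reg_flag := 1))"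
      using agree_on_subset[OF agree, of "ctrl_cells - {reg_tmp, reg_flag}"] by auto
    ultimately show ?thesis
      using sim2 steps_unwritable[OF first_output(2)] first_output(5)
      by (intro exI[of _ M2] exI[of _ "M2'(reg_flag := 1)"]) (auto intro: runs_within_mono)
  qed
qed

section \<open>Sets as words and the infixes of L1\<close>

lemma infix_eq_map_nth:
  "j \<le> length w \<Longrightarrow> 1 \<le> i \<Longrightarrow> i \<le> j \<Longrightarrow> take (j - i + 1) (drop (i - 1) w) = map ((!) w) [i - 1..<j]"
  by (rule nth_equalityI) auto

lemma filter_SE_without_SA:
  "SA \<notin> set xs \<Longrightarrow> filter (\<lambda>x. x \<noteq> SE) xs = replicate (length (filter (\<lambda>x. x \<noteq> SE) xs)) SB"
proof (induction xs)
  case (Cons x xs)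
  then show ?case by (cases x) auto
qed simp

lemma infixes_L1_imp_SB_before_SA:
  assumes "infixes L1 w \<noteq> {}"
    and i: "w ! i = SA" and single: "\<And>j. j < length w \<Longrightarrow> j \<noteq> i \<Longrightarrow> w ! j \<noteq> SA"
  shows "\<exists>j<i. w ! j = SB"
proof -
  obtain x y where xy: "1 \<le> x" "x \<le> y" "y \<le> length w" "take (y - x + 1) (drop (x - 1) w) \<in> L1"
    using assms(1) unfolding infixes_def by auto
  define idx where "idx = filter (\<lambda>t. w ! t \<noteq> SE) [x - 1..<y]"
  have "take (y - x + 1) (drop (x - 1) w) = map ((!) w) [x - 1..<y]"
    using xy(1-3) by (rule infix_eq_map_nth[rotated])
  with xy(4) obtain k where "k \<ge> 1" and letters: "map ((!) w) idx = replicate k SB @ [SA]"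
    unfolding L1_def idx_def by (auto simp: filter_map comp_def)
  then obtain h rest where idx_Cons: "idx = h # rest" and "w ! h = SB"
    by (cases idx; cases k) auto
  have "SA \<in> set (map ((!) w) idx)"
    using letters by simp
  then obtain t where t: "t \<in> set idx" "w ! t = SA"
    by auto
  have in_range: "\<And>t. t \<in> set idx \<Longrightarrow> t < length w"
    using xy unfolding idx_def by auto
  have "t = i"
    using single[OF in_range[OF t(1)]] t(2) by blast
  moreover have "sorted idx"
    unfolding idx_def by (rule sorted_wrt_filter) simp
  then have "h \<le> t"
    using t(1) idx_Cons by auto
  moreover have "h \<noteq> i"
    using \<open>w ! h = SB\<close> i by auto
  ultimately show ?thesis
    using \<open>w ! h = SB\<close> by (intro exI[of _ h]) auto
qed

lemma infix_L1_of_SB_before_SA: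
  assumes i: "i < length w" "w ! i = SA" and single: "\<And>j. j < length w \<Longrightarrow> j \<noteq> i \<Longrightarrow> w ! j \<noteq> SA"
    and j: "j < i" "w ! j = SB"
  shows "(Suc j, Suc i) \<in> infixes L1 w"
proof -
  let ?before = "map ((!) w) [j..<i]"
  have "SA \<noteq> w ! x" if "x < i" for x
    using single[of x] that i by auto
  then have "SA \<notin> set ?before"
    by auto
  have "SB \<in> set (filter (\<lambda>x. x \<noteq> SE) ?before)"
    using j by force
  then have "length (filter (\<lambda>x. x \<noteq> SE) ?before) \<ge> 1"
    using length_pos_if_in_set by (metis One_nat_def Suc_leI)
  moreover have "map ((!) w) [j..<Suc i] = ?before @ [SA]"
    using j(1) i(2) by simp
  ultimately have "filter (\<lambda>x. x \<noteq> SE) (map ((!) w) [j..<Suc i])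
      \<in> {replicate k SB @ [SA] |k. k \<ge> 1}"
    using filter_SE_without_SA[OF \<open>SA \<notin> set ?before\<close>] by auto
  moreover have "take (Suc i - Suc j + 1) (drop (Suc j - 1) w) = map ((!) w) [j..<Suc i]"
    using i(1) j(1) by (subst infix_eq_map_nth) auto
  ultimately have "take (Suc i - Suc j + 1) (drop (Suc j - 1) w) \<in> L1"
    unfolding L1_def by (simp only:) blast
  then show ?thesis
    using i(1) j(1) unfolding infixes_def by auto
qed

lemma infixes_L1_single_SA:
  assumes "i < length w" "w ! i = SA" and "\<And>j. j < length w \<Longrightarrow> j \<noteq> i \<Longrightarrow> w ! j \<noteq> SA"
  shows "infixes L1 w \<noteq> {} \<longleftrightarrow> (\<exists>j<i. w ! j = SB)"
  using infixes_L1_imp_SB_before_SA[of w i] infix_L1_of_SB_before_SA[of i w] assms by blast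

definition set_word :: "nat \<Rightarrow> nat set \<Rightarrow> sym list" where
  "set_word n S = map (\<lambda>j. if Suc j \<in> S then SB else SE) [0..<n]"

lemma length_set_word [simp]: "length (set_word n S) = n"
  by (simp add: set_word_def)

lemma nth_set_word: "j < n \<Longrightarrow> set_word n S ! j = (if Suc j \<in> S then SB else SE)"
  by (simp add: set_word_def)

lemma set_word_insert: "1 \<le> i \<Longrightarrow> i \<le> n \<Longrightarrow> (set_word n S)[i - 1 := SB] = set_word n (insert i S)"
  by (auto simp: set_word_def list_eq_iff_nth_eq nth_list_update)

lemma set_word_remove: "1 \<le> i \<Longrightarrow> i \<le> n \<Longrightarrow> (set_word n S)[i - 1 := SE] = set_word n (S - {i})"
  by (auto simp: set_word_def list_eq_iff_nth_eq nth_list_update)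

lemma infixes_L1_set_word_mark:
  assumes S: "S \<subseteq> {1..n}" and i: "1 \<le> i" "i \<le> n"
  shows "infixes L1 ((set_word n S)[i - 1 := SA]) \<noteq> {} \<longleftrightarrow> (\<exists>s\<in>S. s < i)"
proof -
  let ?w = "(set_word n S)[i - 1 := SA]"
  have nth: "?w ! j = (if j = i - 1 then SA else if Suc j \<in> S then SB else SE)" if "j < n" for j
    using that i by (simp add: nth_set_word nth_list_update)
  have "infixes L1 ?w \<noteq> {} \<longleftrightarrow> (\<exists>j<i - 1. ?w ! j = SB)"
    by (rule infixes_L1_single_SA) (use i nth in \<open>auto simp: nth_set_word\<close>)
  also have "\<dots> \<longleftrightarrow> (\<exists>j<i - 1. Suc j \<in> S)"
  proof -
    have "?w ! j = SB \<longleftrightarrow> Suc j \<in> S" if "j < i - 1" for j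
      using that i nth[of j] by simp
    then show ?thesis by blast
  qed
  also have "\<dots> \<longleftrightarrow> (\<exists>s\<in>S. s < i)"
  proof
    assume "\<exists>s\<in>S. s < i"
    then obtain s where "s \<in> S" "s < i" by blast
    moreover from \<open>s \<in> S\<close> S have "1 \<le> s" by auto
    ultimately show "\<exists>j<i - 1. Suc j \<in> S"
      by (intro exI[of _ "s - 1"]) auto
  next
    assume "\<exists>j<i - 1. Suc j \<in> S"
    then obtain j where "j < i - 1" "Suc j \<in> S" by blast
    then show "\<exists>s\<in>S. s < i"
      by (intro bexI[of _ "Suc j"]) auto
  qed
  finally show ?thesis .
qed

lemma capacity_pos: "0 < capacity K n"
  by (simp add: capacity_def)

lemma capacity_add: "capacity (K + B + 6) n = capacity K n * (n + 2) ^ (B + 6)"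
  by (simp add: capacity_def power_add)

lemma capacity_sim_bound:
  assumes "v < capacity K n"
  shows "2 * v + 15 < capacity (K + B + 6) n"
proof -
  have "(2::nat) ^ 6 \<le> (n + 2) ^ 6"
    by (rule power_mono) auto
  also have "\<dots> \<le> (n + 2) ^ (B + 6)"
    by (rule power_increasing) auto
  finally have "capacity K n * 64 \<le> capacity (K + B + 6) n"
    by (simp add: capacity_add)
  then show ?thesis
    using assms by linarith
qed

lemma capacity_linear_bound:
  assumes "x \<le> 2 * (B + 1) * (n + 2) + 16"
  shows "x < capacity (K + B + 6) n"
proof -
  have "B + 1 \<le> (2::nat) ^ B"
    by (induction B) auto
  then have "32 * (B + 1) \<le> (2::nat) ^ (B + 5)"
    by (simp add: power_add)
  also have "\<dots> \<le> (n + 2) ^ (B + 5)"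
    by (rule power_mono) auto
  finally have "32 * (B + 1) * (n + 2) \<le> (n + 2) ^ (B + 5) * (n + 2)"
    by (rule mult_le_mono1)
  also have "\<dots> = (n + 2) ^ (B + 6)"
    using power_Suc2[of "n + 2" "B + 5"] by (simp add: add.commute)
  also have "\<dots> \<le> capacity (K + B + 6) n"
    using capacity_pos[of K n] by (simp add: capacity_add)
  finally show ?thesis
    using assms by (simp add: algebra_simps)
qed

section \<open>A prefix-U1 structure from a tractable L1\<close>

lemma reach_invariant:
  "reach P U B K w M \<Longrightarrow>
    mem_bounded (capacity K (length w)) M \<and> (\<forall>x. x \<notin> main_region B (length w) \<longrightarrow> M x = 0)"
proof (induction rule: reach.induct)
  case (init w pc M)
  then obtain k os where "steps P (word_input w) (capacity K (length w)) (main_region B (length w))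
      k (0, zero_mem) = Some ((pc, M), os)"
    unfolding halts_within_def by blast
  moreover have "mem_bounded (capacity K (length w)) zero_mem"
    by (simp add: mem_bounded_def zero_mem_def capacity_pos)
  ultimately show ?case
    using steps_mem_bounded steps_unwritable by (fastforce simp: zero_mem_def)
next
  case (upd w M i a pc M')
  then obtain k os where "steps U (upd_input i a) (capacity K (length w)) (main_region B (length w))
      k (0, M) = Some ((pc, M'), os)"
    unfolding halts_within_def by blast
  with upd.IH show ?case
    using steps_mem_bounded steps_unwritable by fastforce
qed

definition clear_cell_code :: "nat \<Rightarrow> instr list" where
  "clear_cell_code j =
    [Const reg_tmp2 (2 * j), Add reg_tmp reg_scratch reg_tmp2, Store reg_tmp reg_zero]"

definition clear_code :: "nat \<Rightarrow> instr list" where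
  "clear_code m = concat (map clear_cell_code [0..<m])"

lemma length_clear_code [simp]: "length (clear_code m) = 3 * m"
  by (induction m) (auto simp: clear_code_def clear_cell_code_def)

lemma clear_code_run:
  assumes "code_at prog pc (clear_code m)"
    and regs: "M' reg_scratch = s" "M' reg_zero = 0" "14 \<le> s"
    and cap: "s + 2 * m < cap"
  shows "\<exists>M2'. runs_within prog inp cap UNIV (3 * m) (pc, M') (pc + 3 * m, M2') \<and>
           (\<forall>a. a \<notin> {reg_tmp, reg_tmp2} \<longrightarrow> M2' a = (if \<exists>j<m. a = s + 2 * j then 0 else M' a))"
  using assms(1) cap
proof (induction m)
  case 0
  then show ?case by (auto intro: runs_within_refl)
next
  case (Suc m)
  have "clear_code (Suc m) = clear_code m @ clear_cell_code m"
    by (simp add: clear_code_def)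
  with Suc.prems(1) have code: "code_at prog pc (clear_code m)"
    and last: "code_at prog (pc + 3 * m) (clear_cell_code m)"
    by (simp_all add: code_at_append)
  obtain Mj where run: "runs_within prog inp cap UNIV (3 * m) (pc, M') (pc + 3 * m, Mj)"
    and Mj: "\<forall>a. a \<notin> {reg_tmp, reg_tmp2} \<longrightarrow> Mj a = (if \<exists>j<m. a = s + 2 * j then 0 else M' a)"
    using Suc.IH[OF code] Suc.prems(2) by auto
  have "Mj reg_scratch = s" "Mj reg_zero = 0" "Mj (Suc 0) = 0"
    using Mj regs by auto
  with last Suc.prems(2) have "steps prog inp cap UNIV 3 (pc + 3 * m, Mj) =
      Some ((pc + 3 * Suc m, Mj(reg_tmp2 := 2 * m, reg_tmp := s + 2 * m, s + 2 * m := 0)), [])"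
    by (simp add: clear_cell_code_def steps_numeral halted_def step_def wr_def)
  then have "runs_within prog inp cap UNIV 3 (pc + 3 * m, Mj)
      (pc + 3 * Suc m, Mj(reg_tmp2 := 2 * m, reg_tmp := s + 2 * m, s + 2 * m := 0))"
    by (rule runs_withinI) simp
  from runs_within_trans[OF run this]
  have "runs_within prog inp cap UNIV (3 * Suc m) (pc, M')
      (pc + 3 * Suc m, Mj(reg_tmp2 := 2 * m, reg_tmp := s + 2 * m, s + 2 * m := 0))"
    by (simp add: add.commute)
  moreover have "\<forall>a. a \<notin> {reg_tmp, reg_tmp2} \<longrightarrow>
      (Mj(reg_tmp2 := 2 * m, reg_tmp := s + 2 * m, s + 2 * m := 0)) a
        = (if \<exists>j<Suc m. a = s + 2 * j then 0 else M' a)"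
    using Mj by (auto simp: less_Suc_eq)
  ultimately show ?case by blast
qed

locale L1_structure =
  fixes P U E :: "instr list" and B K :: nat
  assumes preprocess: "\<forall>w. \<exists>c. halts_within P (word_input w) (capacity K (length w))
      (main_region B (length w)) (B * (length w + 1)) (0, zero_mem) c"
    and update: "\<forall>w M i a. reach P U B K w M \<and> 1 \<le> i \<and> i \<le> length w \<longrightarrow>
      (\<exists>c. halts_within U (upd_input i a) (capacity K (length w)) (main_region B (length w))
        B (0, M) c)"
    and enumerate: "\<forall>w M. reach P U B K w M \<longrightarrow>
      enum_ok E (capacity K (length w)) (scratch_region B (length w)) B M (infixes L1 w)"
begin

abbreviation host_cap :: "nat \<Rightarrow> nat" where
  "host_cap n \<equiv> capacity (K + B + 6) n"

abbreviation host_runs :: "instr list \<Rightarrow> nat \<Rightarrow> nat \<Rightarrow> nat \<Rightarrow> conf \<Rightarrow> conf \<Rightarrow> bool" where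
  "host_runs prog n i t c c' \<equiv> runs_within prog (arg_input i) (host_cap n) UNIV t c c'"

lemma host_cap_sim: "\<forall>v<capacity K n. 2 * v + 15 < host_cap n"
  using capacity_sim_bound by blast

lemma host_cap_bounds:
  assumes "1 \<le> i" "i \<le> n"
  shows "i < host_cap n" "i + i < host_cap n" "sim_addr i < host_cap n"
    "Suc (sim_addr i) < host_cap n" "3 < host_cap n" "code a < host_cap n"
  using assms by (auto intro!: capacity_linear_bound simp: sim_addr_def code_def split: sym.split)

definition scratch_addr :: "nat \<Rightarrow> nat" where
  "scratch_addr n = sim_addr (B * (n + 1))"

(* The odd cells repeat the letters of set_word n S as bits: they answer membership tests in
   constant time and tell the query which letter to restore after probing. *)
definition represents :: "nat \<Rightarrow> nat set \<Rightarrow> mem \<Rightarrow> bool" where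
  "represents n S M' \<longleftrightarrow> S \<subseteq> {1..n} \<and> (\<exists>M. reach P U B K (set_word n S) M \<and> sim_mem M M') \<and>
     M' reg_zero = 0 \<and> M' reg_offset = 14 \<and> M' reg_one = 1 \<and> M' reg_scratch = scratch_addr n \<and>
     (\<forall>j. 1 \<le> j \<and> j \<le> n \<longrightarrow> M' (Suc (sim_addr j)) = (if j \<in> S then 1 else 0))"

(* afterwards sim_input is word_input (set_word n {}), the input of the preprocessing *)
definition init_prefix :: "instr list" where
  "init_prefix =
    [Const reg_one 1, Const reg_offset 14, Inp reg_n reg_zero, Const reg_tmp (2 * B),
     Add reg_tmp2 reg_n reg_one, Mul reg_scratch reg_tmp reg_tmp2,
     Add reg_scratch reg_scratch reg_offset, Add reg_inp0 reg_n reg_zero,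
     Const reg_inp_mid (code SE), Add reg_inp_len reg_n reg_zero, Const reg_inp_last 0]"

definition init_prog :: "instr list" where
  "init_prog = init_prefix @ compile_prog 11 False P"

lemma length_init_prog: "length init_prog = 11 + length P * block_len"
  by (simp add: init_prog_def init_prefix_def)

lemma init_run:
  "\<exists>t M'. host_runs init_prog n n t (0, zero_mem) (length init_prog, M')
     \<and> represents n {} M'"
proof -
  have small: "n < host_cap n" "2 * B < host_cap n" "Suc n < host_cap n"
    "2 * B * Suc n < host_cap n" "2 * B * Suc n + 14 < host_cap n" "14 < host_cap n"
    "3 < host_cap n" "Suc 0 < host_cap n"
    by (rule capacity_linear_bound; simp add: algebra_simps)+
  have code: "code_at init_prog 0 init_prefix" "code_at init_prog 11 (compile_prog 11 False P)"
    using code_at_middle[of "[]" 0 init_prefix] code_at_middle[of init_prefix 11 _ "[]"]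
    by (simp_all add: init_prog_def init_prefix_def)
  have "\<exists>M0'. steps init_prog (arg_input n) (host_cap n) UNIV 11 (0, zero_mem)
        = Some ((11, M0'), [])
      \<and> sim_mem zero_mem M0' \<and> sim_regs (word_input (set_word n {})) M0'
      \<and> M0' reg_scratch = scratch_addr n \<and> (\<forall>j. M0' (Suc (sim_addr j)) = 0)"
    using code(1) small
    by (simp add: init_prefix_def steps_numeral halted_def step_def wr_def arg_input_def
        zero_mem_def sim_mem_def sim_regs_def sim_input_def word_input_def nth_set_word
        scratch_addr_def sim_addr_def code_def algebra_simps)
  then obtain M0' where prefix: "host_runs init_prog n n 11 (0, zero_mem) (11, M0')"
    and sim0: "sim_mem zero_mem M0'" and regs0: "sim_regs (word_input (set_word n {})) M0'"
    and M0': "M0' reg_scratch = scratch_addr n" "\<forall>j. M0' (Suc (sim_addr j)) = 0"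
    by (auto intro: runs_withinI)
  obtain pc M where halts: "halts_within P (word_input (set_word n {})) (capacity K n)
      (main_region B n) (B * (n + 1)) (0, zero_mem) (pc, M)"
    using preprocess[rule_format, of "set_word n {}"] by auto
  then have "reach P U B K (set_word n {}) M"
    by (intro reach.init) simp
  moreover obtain M' where "host_runs init_prog n n (B * (n + 1) * block_len + 1)
      (11, M0') (length init_prog, M')" and "sim_mem M M'"
    and agree: "agree_on (ctrl_cells - {reg_tmp}) M0' M'"
    using sim_halting_run[where inp' = "arg_input n", OF code(2) host_cap_sim halts sim0 regs0]
    by (auto simp: mem_bounded_def zero_mem_def capacity_pos length_init_prog)
  moreover have "M' reg_zero = 0" "M' reg_offset = 14" "M' reg_one = 1"
    "M' reg_scratch = scratch_addr n" "M' (Suc (sim_addr j)) = 0" for j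
    using agree_onD[OF agree] regs0 M0' by (auto simp: sim_regs_def)
  ultimately show ?thesis
    using runs_within_trans[OF prefix] unfolding represents_def by fastforce
qed

lemma update_phase:
  assumes code: "code_at prog off (compile_prog off False U)"
    and reach: "reach P U B K w M" and n: "length w = n" and i: "1 \<le> i" "i \<le> n"
    and sim: "sim_mem M M'"
    and regs: "M' reg_zero = 0" "M' reg_offset = 14" "M' reg_one = 1" "M' reg_inp0 = i"
      "M' reg_inp_len = 0" "M' reg_inp_last = code a"
  shows "\<exists>M2 M2'. reach P U B K (w[i - 1 := a]) M2 \<and>
     runs_within prog inp (host_cap n) UNIV (B * block_len + 1)
       (off, M') (off + length U * block_len, M2') \<and>
     sim_mem M2 M2' \<and> agree_on (ctrl_cells - {reg_tmp}) M' M2'"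
proof -
  obtain pc M2
    where halts: "halts_within U (upd_input i a) (capacity K n) (main_region B n) B (0, M) (pc, M2)"
    using update[rule_format, of w M i a] reach n i by auto
  have "reach P U B K (w[i - 1 := a]) M2"
    using reach.upd[OF reach i(1) _ halts[folded n]] i n by simp
  moreover have "sim_regs (upd_input i a) M'"
    using regs by (auto simp: sim_regs_def sim_input_def upd_input_def)
  moreover have "mem_bounded (capacity K n) M"
    using reach_invariant[OF reach] n by simp
  ultimately show ?thesis
    using sim_halting_run[OF code host_cap_sim halts sim] by blast
qed

(* afterwards sim_input is upd_input i a for the argument i and c = code a *)
definition upd_prefix :: "nat \<Rightarrow> instr list" where
  "upd_prefix c =
    [Inp reg_arg reg_zero, Add reg_inp0 reg_arg reg_zero, Const reg_inp_len 0,
     Const reg_inp_last c]"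

lemma length_upd_prefix [simp]: "length (upd_prefix c) = 4"
  by (simp add: upd_prefix_def)

definition bit_addr_code :: "instr list" where
  "bit_addr_code =
    [Add reg_tmp reg_arg reg_arg, Add reg_tmp reg_tmp reg_offset, Add reg_tmp reg_tmp reg_one]"

definition update_prog :: "sym \<Rightarrow> nat \<Rightarrow> instr list" where
  "update_prog a bit_reg =
    upd_prefix (code a) @ compile_prog 4 False U @ bit_addr_code @ [Store reg_tmp bit_reg]"

definition test_prog :: "instr list" where
  "test_prog = Inp reg_arg reg_zero # bit_addr_code @ [Load reg_ans reg_tmp]"

abbreviation insert_prog :: "instr list" where
  "insert_prog \<equiv> update_prog SB reg_one"

abbreviation remove_prog :: "instr list" where
  "remove_prog \<equiv> update_prog SE reg_zero"

lemma length_update_prog: "length (update_prog a bit_reg) = 8 + length U * block_len"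
  by (simp add: update_prog_def upd_prefix_def bit_addr_code_def)

lemma letter_update_run:
  assumes code: "code_at prog 0 (upd_prefix (code a) @ compile_prog 4 False U)"
    and rep: "represents n S M'" and i: "1 \<le> i" "i \<le> n"
  defines "M1' \<equiv> M'(reg_arg := i, reg_inp0 := i, reg_inp_len := 0, reg_inp_last := code a)"
  shows "\<exists>M2 M2'. reach P U B K ((set_word n S)[i - 1 := a]) M2 \<and>
     host_runs prog n i (B * block_len + 5) (0, M') (4 + length U * block_len, M2') \<and>
     sim_mem M2 M2' \<and> agree_on (ctrl_cells - {reg_tmp}) M1' M2'"
proof -
  obtain M where reach: "reach P U B K (set_word n S) M" and sim: "sim_mem M M'"
    and regs: "M' reg_zero = 0" "M' reg_offset = 14" "M' reg_one = 1"
    using rep unfolding represents_def by blast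
  have "steps prog (arg_input i) (host_cap n) UNIV 4 (0, M') = Some ((4, M1'), [])"
    using code regs host_cap_bounds[OF i]
    by (simp add: code_at_append M1'_def upd_prefix_def steps_numeral halted_def step_def wr_def
        arg_input_def)
  then have run1: "host_runs prog n i 4 (0, M') (4, M1')"
    by (rule runs_withinI) simp
  obtain M2 M2' where "reach P U B K ((set_word n S)[i - 1 := a]) M2"
    and run2: "host_runs prog n i (B * block_len + 1) (4, M1') (4 + length U * block_len, M2')"
    and "sim_mem M2 M2'" "agree_on (ctrl_cells - {reg_tmp}) M1' M2'"
    using update_phase[where inp = "arg_input i", OF _ reach _ i, of prog 4 M1' a] code sim regs
    by (auto simp: M1'_def code_at_append)
  moreover have "host_runs prog n i (B * block_len + 5) (0, M') (4 + length U * block_len, M2')"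
    using runs_within_trans[OF run1 run2] by (simp add: add.commute)
  ultimately show ?thesis by blast
qed

lemma update_run:
  assumes rep: "represents n S M'" and i: "1 \<le> i" "i \<le> n"
    and op: "a = SB \<and> bit_reg = reg_one \<and> S' = insert i S \<or>
      a = SE \<and> bit_reg = reg_zero \<and> S' = S - {i}"
  shows "\<exists>M''. host_runs (update_prog a bit_reg) n i (B * block_len + 9)
            (0, M') (length (update_prog a bit_reg), M'') \<and> represents n S' M''"
proof -
  let ?prog = "update_prog a bit_reg" and ?mid = "4 + length U * block_len"
  have regs: "M' reg_zero = 0" "M' reg_offset = 14" "M' reg_one = 1"
      "M' reg_scratch = scratch_addr n"
    and bits: "\<And>j. 1 \<le> j \<Longrightarrow> j \<le> n \<Longrightarrow> M' (Suc (sim_addr j)) = (if j \<in> S then 1 else 0)"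
    and S: "S \<subseteq> {1..n}"
    using rep unfolding represents_def by auto
  have code: "code_at ?prog 0 (upd_prefix (code a) @ compile_prog 4 False U)"
    "code_at ?prog ?mid (bit_addr_code @ [Store reg_tmp bit_reg])"
    using code_at_middle[of "[]" 0 "upd_prefix (code a) @ compile_prog 4 False U"]
      code_at_middle[of "upd_prefix (code a) @ compile_prog 4 False U" ?mid _ "[]"]
    by (simp_all add: update_prog_def)
  obtain M2 M2' where reach2: "reach P U B K ((set_word n S)[i - 1 := a]) M2"
    and run1: "host_runs ?prog n i (B * block_len + 5) (0, M') (?mid, M2')"
    and sim2: "sim_mem M2 M2'"
    and agree2: "agree_on (ctrl_cells - {reg_tmp})
      (M'(reg_arg := i, reg_inp0 := i, reg_inp_len := 0, reg_inp_last := code a)) M2'"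
    using letter_update_run[OF code(1) rep i] by blast
  have M2': "M2' reg_zero = 0" "M2' reg_offset = 14" "M2' reg_one = 1" "M2' reg_arg = i"
    "M2' reg_scratch = scratch_addr n" "M2' (Suc 0) = 0"
    "\<And>j. M2' (Suc (sim_addr j)) = M' (Suc (sim_addr j))"
    using agree_onD[OF agree2] regs by auto
  define M3' where "M3' = M2'(reg_tmp := Suc (sim_addr i), Suc (sim_addr i) := M2' bit_reg)"
  have "steps ?prog (arg_input i) (host_cap n) UNIV 4 (?mid, M2') = Some ((?mid + 4, M3'), [])"
    using code(2) M2' host_cap_bounds[OF i] op
    by (auto simp: M3'_def bit_addr_code_def steps_numeral halted_def step_def wr_def sim_addr_def)
  then have run2: "host_runs ?prog n i 4 (?mid, M2') (?mid + 4, M3')"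
    by (rule runs_withinI) simp
  have "represents n S' M3'"
    unfolding represents_def
  proof (intro conjI)
    show "S' \<subseteq> {1..n}"
      using S i op by auto
    show "\<exists>M. reach P U B K (set_word n S') M \<and> sim_mem M M3'"
      using reach2 sim2 op set_word_insert[OF i] set_word_remove[OF i] by (auto simp: M3'_def)
    show "\<forall>j. 1 \<le> j \<and> j \<le> n \<longrightarrow> M3' (Suc (sim_addr j)) = (if j \<in> S' then 1 else 0)"
      using bits M2' op by (auto simp: M3'_def)
  qed (use M2' in \<open>simp_all add: M3'_def\<close>)
  moreover have "host_runs ?prog n i (B * block_len + 9) (0, M') (length ?prog, M3')"
    using runs_within_trans[OF run1 run2] by (simp add: length_update_prog add.commute)
  ultimately show ?thesis by blast
qed

lemma test_run:
  assumes rep: "represents n S M'" and i: "1 \<le> i" "i \<le> n"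
  shows "\<exists>M''. host_runs test_prog n i 5 (0, M') (5, M'') \<and>
           represents n S M'' \<and> (M'' reg_ans \<noteq> 0 \<longleftrightarrow> i \<in> S)"
proof -
  have regs: "M' reg_zero = 0" "M' reg_offset = 14" "M' reg_one = 1"
    and member: "M' (Suc (sim_addr i)) = (if i \<in> S then 1 else 0)"
    using rep i unfolding represents_def by auto
  define M'' where
    "M'' = M'(reg_arg := i, reg_tmp := Suc (sim_addr i), reg_ans := M' (Suc (sim_addr i)))"
  have "steps test_prog (arg_input i) (host_cap n) UNIV 5 (0, M') = Some ((5, M''), [])"
    using regs member host_cap_bounds[OF i]
    by (simp add: M''_def test_prog_def bit_addr_code_def steps_numeral halted_def step_def wr_def
        arg_input_def sim_addr_def)
  then have "host_runs test_prog n i 5 (0, M') (5, M'')"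
    by (rule runs_withinI) simp
  moreover have "represents n S M''"
    using rep unfolding represents_def M''_def by auto
  ultimately show ?thesis
    using member by (intro exI[of _ M'']) (simp add: M''_def)
qed

definition query_enum_off :: nat where
  "query_enum_off = 7 + length U * block_len"

definition query_clear_off :: nat where
  "query_clear_off = query_enum_off + length E * block_len"

definition query_restore_off :: nat where
  "query_restore_off = query_clear_off + 3 * B"

definition query_update_off :: nat where
  "query_update_off = query_restore_off + 7"

(* sim_input becomes upd_input i of the letter recorded by the membership bit b of i,
   whose code is code SE - b *)
definition restore_code :: "instr list" where
  "restore_code = Add reg_inp0 reg_arg reg_zero # bit_addr_code @
     [Load reg_tmp2 reg_tmp, Const reg_inp_last (code SE), Sub reg_inp_last reg_inp_last reg_tmp2]"

definition query_prog :: "instr list" where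
  "query_prog =
    upd_prefix (code SA) @ compile_prog 4 False U @
    [Const reg_inp0 0, Const reg_inp_last 0, Const reg_flag 0] @
    compile_prog query_enum_off True E @ clear_code B @ restore_code @
    compile_prog query_update_off False U @ [Sub reg_ans reg_one reg_flag]"

lemma length_query_prog: "length query_prog = query_update_off + length U * block_len + 1"
  by (simp add: query_prog_def query_update_off_def query_restore_off_def query_clear_off_def
      query_enum_off_def upd_prefix_def restore_code_def bit_addr_code_def)

lemma query_code:
  "code_at query_prog 0 (upd_prefix (code SA) @ compile_prog 4 False U)"
  "code_at query_prog (4 + length U * block_len)
     [Const reg_inp0 0, Const reg_inp_last 0, Const reg_flag 0]"
  "code_at query_prog query_enum_off (compile_prog query_enum_off True E)"
  "code_at query_prog query_clear_off (clear_code B)"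
  "code_at query_prog query_restore_off restore_code"
  "code_at query_prog query_update_off (compile_prog query_update_off False U)"
  "code_at query_prog (query_update_off + length U * block_len) [Sub reg_ans reg_one reg_flag]"
proof -
  let ?p1 = "upd_prefix (code SA)" and ?p2 = "compile_prog 4 False U"
    and ?p3 = "[Const reg_inp0 0, Const reg_inp_last 0, Const reg_flag 0]"
    and ?p4 = "compile_prog query_enum_off True E" and ?p5 = "clear_code B" and ?p6 = restore_code
    and ?p7 = "compile_prog query_update_off False U" and ?p8 = "[Sub reg_ans reg_one reg_flag]"
  have q: "query_prog = ?p1 @ ?p2 @ ?p3 @ ?p4 @ ?p5 @ ?p6 @ ?p7 @ ?p8"
    by (simp add: query_prog_def)
  note offs = query_update_off_def query_restore_off_def query_clear_off_def query_enum_off_def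
    upd_prefix_def restore_code_def bit_addr_code_def
  show "code_at query_prog 0 (?p1 @ ?p2)"
    using code_at_middle[of "[]" 0 "?p1 @ ?p2"] by (simp add: q)
  show "code_at query_prog (4 + length U * block_len) ?p3"
    using code_at_middle[of "?p1 @ ?p2" "4 + length U * block_len" ?p3] by (simp add: q offs)
  show "code_at query_prog query_enum_off ?p4"
    using code_at_middle[of "?p1 @ ?p2 @ ?p3" query_enum_off ?p4] by (simp add: q offs)
  show "code_at query_prog query_clear_off ?p5"
    using code_at_middle[of "?p1 @ ?p2 @ ?p3 @ ?p4" query_clear_off ?p5] by (simp add: q offs)
  show "code_at query_prog query_restore_off ?p6"
    using code_at_middle[of "?p1 @ ?p2 @ ?p3 @ ?p4 @ ?p5" query_restore_off ?p6]
    by (simp add: q offs)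
  show "code_at query_prog query_update_off ?p7"
    using code_at_middle[of "?p1 @ ?p2 @ ?p3 @ ?p4 @ ?p5 @ ?p6" query_update_off ?p7]
    by (simp add: q offs)
  show "code_at query_prog (query_update_off + length U * block_len) ?p8"
    using code_at_middle[of "?p1 @ ?p2 @ ?p3 @ ?p4 @ ?p5 @ ?p6 @ ?p7"
        "query_update_off + length U * block_len" ?p8 "[]"]
    by (simp add: q offs)
qed

definition kept_cells :: "nat set" where
  "kept_cells = {reg_zero, reg_offset, reg_one, reg_scratch, reg_arg, reg_inp_len} \<union>
     range (\<lambda>j. Suc (sim_addr j))"

lemma kept_cells_ctrl: "kept_cells \<subseteq> ctrl_cells - {reg_tmp, reg_tmp2, reg_flag}"
  by (auto simp: kept_cells_def)

lemma query_probe: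
  assumes rep: "represents n S M'" and i: "1 \<le> i" "i \<le> n"
  defines "M1' \<equiv> M'(reg_arg := i, reg_inp0 := i, reg_inp_len := 0, reg_inp_last := code SA)"
  shows "\<exists>M2 ME ME'. reach P U B K ((set_word n S)[i - 1 := SA]) M2 \<and>
     host_runs query_prog n i (2 * B * block_len + 10) (0, M') (query_clear_off, ME') \<and>
     sim_mem ME ME' \<and> (\<forall>x. x \<notin> scratch_region B n \<longrightarrow> ME x = M2 x) \<and>
     agree_on kept_cells M1' ME' \<and> (ME' reg_flag \<noteq> 0 \<longleftrightarrow> (\<exists>s\<in>S. s < i))"
proof -
  let ?run = "host_runs query_prog n i"
  have S: "S \<subseteq> {1..n}" and regs: "M' reg_zero = 0" "M' reg_offset = 14" "M' reg_one = 1"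
    using rep unfolding represents_def by auto
  obtain M2 M2' where reach2: "reach P U B K ((set_word n S)[i - 1 := SA]) M2"
    and run12: "?run (B * block_len + 5) (0, M') (4 + length U * block_len, M2')"
    and sim2: "sim_mem M2 M2'" and agree2: "agree_on (ctrl_cells - {reg_tmp}) M1' M2'"
    using letter_update_run[OF query_code(1) rep i] unfolding M1'_def by blast
  define M3' where "M3' = M2'(reg_inp0 := 0, reg_inp_last := 0, reg_flag := 0)"
  have M2': "M2' reg_zero = 0" "M2' (Suc 0) = 0" "M2' reg_offset = 14" "M2' reg_one = 1"
    "M2' reg_inp_len = 0"
    using agree_onD[OF agree2] regs by (auto simp: M1'_def)
  with query_code(2) have "steps query_prog (arg_input i) (host_cap n) UNIV 3
      (4 + length U * block_len, M2') = Some ((query_enum_off, M3'), [])"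
    using host_cap_bounds[OF i]
    by (simp add: M3'_def steps_numeral halted_def step_def wr_def query_enum_off_def)
  then have run3: "?run 3 (4 + length U * block_len, M2') (query_enum_off, M3')"
    by (rule runs_withinI) simp
  have regs3: "sim_regs (\<lambda>_. 0) M3'"
    using M2' by (simp add: sim_regs_def sim_input_def M3'_def)
  have enum: "enum_ok E (capacity K n) (scratch_region B n) B M2
      (infixes L1 ((set_word n S)[i - 1 := SA]))"
    using enumerate[rule_format, OF reach2] by simp
  have sim3: "sim_mem M2 M3'" and flag3: "M3' reg_flag = 0"
    using sim2 by (simp_all add: M3'_def)
  have bounded: "mem_bounded (capacity K n) M2"
    using reach_invariant[OF reach2] by simp
  obtain ME ME' where run4: "?run (B * block_len + 2) (query_enum_off, M3') (query_clear_off, ME')"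
    and simE: "sim_mem ME ME'" and agreeE: "agree_on (ctrl_cells - {reg_tmp, reg_flag}) M3' ME'"
    and scratch: "\<forall>x. x \<notin> scratch_region B n \<longrightarrow> ME x = M2 x"
    and flag: "ME' reg_flag \<noteq> 0 \<longleftrightarrow> infixes L1 ((set_word n S)[i - 1 := SA]) \<noteq> {}"
    using sim_enum_probe[where inp' = "arg_input i",
        OF query_code(3) host_cap_sim enum sim3 regs3 bounded flag3]
    by (auto simp: query_clear_off_def)
  have "agree_on kept_cells M1' ME'"
  proof -
    have "agree_on kept_cells M1' M2'"
      using agree_on_subset[OF agree2] kept_cells_ctrl by blast
    moreover have "agree_on kept_cells M2' M3'"
      by (auto simp: agree_on_def M3'_def kept_cells_def)
    moreover have "agree_on kept_cells M3' ME'"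
      using agree_on_subset[OF agreeE] kept_cells_ctrl by blast
    ultimately show ?thesis
      using agree_on_trans by blast
  qed
  moreover have "?run (2 * B * block_len + 10) (0, M') (query_clear_off, ME')"
    using runs_within_trans[OF runs_within_trans[OF run12 run3] run4] by (simp add: algebra_simps)
  ultimately show ?thesis
    using reach2 simE scratch flag infixes_L1_set_word_mark[OF S i] by blast
qed

lemma query_clear:
  assumes reach: "reach P U B K w M2" and n: "length w = n"
    and sim: "sim_mem ME ME'" and scratch: "\<forall>x. x \<notin> scratch_region B n \<longrightarrow> ME x = M2 x"
    and regs: "ME' reg_scratch = scratch_addr n" "ME' reg_zero = 0"
  shows "\<exists>Mz. runs_within query_prog inp (host_cap n) UNIV (3 * B)
              (query_clear_off, ME') (query_restore_off, Mz)
           \<and> sim_mem M2 Mz \<and> agree_on (ctrl_cells - {reg_tmp, reg_tmp2}) ME' Mz"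
proof -
  have addr: "scratch_addr n + 2 * j = sim_addr (B * (n + 1) + j)" for j
    by (simp add: scratch_addr_def sim_addr_def algebra_simps)
  have "scratch_addr n + 2 * B < host_cap n"
    by (rule capacity_linear_bound) (simp add: scratch_addr_def sim_addr_def algebra_simps)
  moreover have "14 \<le> scratch_addr n"
    by (simp add: scratch_addr_def sim_addr_def)
  ultimately obtain Mz
    where run: "runs_within query_prog inp (host_cap n) UNIV (3 * B) (query_clear_off, ME')
      (query_clear_off + 3 * B, Mz)"
    and Mz: "\<forall>a. a \<notin> {reg_tmp, reg_tmp2} \<longrightarrow>
      Mz a = (if \<exists>j<B. a = scratch_addr n + 2 * j then 0 else ME' a)"
    using clear_code_run[OF query_code(4) regs] by blast
  note Mz = Mz[unfolded addr, rule_format]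
  have "Mz (sim_addr x) = M2 x" for x
  proof (cases "x \<in> scratch_region B n")
    case True
    then have "\<exists>j<B. sim_addr x = sim_addr (B * (n + 1) + j)"
      by (intro exI[of _ "x - B * (n + 1)"]) (auto simp: scratch_region_def)
    moreover have "M2 x = 0"
      using reach_invariant[OF reach] True n by (auto simp: main_region_def scratch_region_def)
    ultimately show ?thesis
      using Mz by auto
  next
    case False
    then have "\<not> (\<exists>j<B. sim_addr x = sim_addr (B * (n + 1) + j))"
      by (auto simp: scratch_region_def)
    then show ?thesis
      using Mz scratch False sim by (auto simp: sim_mem_def)
  qed
  then have "sim_mem M2 Mz"
    by (simp add: sim_mem_def)
  moreover have "agree_on (ctrl_cells - {reg_tmp, reg_tmp2}) ME' Mz"
    unfolding agree_on_def using Mz sim_addr_not_ctrl by (metis Diff_iff)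
  ultimately show ?thesis
    using run by (auto simp: query_restore_off_def)
qed

lemma query_restore:
  assumes S: "S \<subseteq> {1..n}" and i: "1 \<le> i" "i \<le> n"
    and reach: "reach P U B K ((set_word n S)[i - 1 := SA]) M2" and sim: "sim_mem M2 Mz"
    and regs: "Mz reg_zero = 0" "Mz reg_offset = 14" "Mz reg_one = 1"
      "Mz reg_scratch = scratch_addr n" "Mz reg_arg = i" "Mz reg_inp_len = 0"
    and bits: "\<And>j. 1 \<le> j \<Longrightarrow> j \<le> n \<Longrightarrow> Mz (Suc (sim_addr j)) = (if j \<in> S then 1 else 0)"
  shows "\<exists>M''. host_runs query_prog n i (B * block_len + 9)
            (query_restore_off, Mz) (length query_prog, M'') \<and>
           represents n S M'' \<and> (M'' reg_ans \<noteq> 0 \<longleftrightarrow> Mz reg_flag = 0)"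
proof -
  let ?run = "host_runs query_prog n i"
  define a where "a = (if i \<in> S then SB else SE)"
  define b :: nat where "b = (if i \<in> S then 1 else 0)"
  define M5' where
    "M5' = Mz(reg_inp0 := i, reg_tmp := Suc (sim_addr i), reg_tmp2 := b, reg_inp_last := code a)"
  have "steps query_prog (arg_input i) (host_cap n) UNIV 7 (query_restore_off, Mz)
      = Some ((query_update_off, M5'), [])"
    using query_code(5) regs bits[OF i] host_cap_bounds[OF i]
    by (simp add: M5'_def a_def b_def code_def restore_code_def bit_addr_code_def steps_numeral
        halted_def step_def wr_def sim_addr_def query_update_off_def)
  then have run5: "?run 7 (query_restore_off, Mz) (query_update_off, M5')"
    by (rule runs_withinI) simp
  obtain M6 M6' where reach6: "reach P U B K (((set_word n S)[i - 1 := SA])[i - 1 := a]) M6"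
    and run6: "?run (B * block_len + 1)
      (query_update_off, M5') (query_update_off + length U * block_len, M6')"
    and sim6: "sim_mem M6 M6'" and agree6: "agree_on (ctrl_cells - {reg_tmp}) M5' M6'"
    using update_phase[where inp = "arg_input i", OF query_code(6) reach _ i, of M5' a] sim regs
    by (auto simp: M5'_def)
  have word: "((set_word n S)[i - 1 := SA])[i - 1 := a] = set_word n S"
    using i by (simp add: a_def list_eq_iff_nth_eq nth_list_update nth_set_word)
  have M6': "M6' reg_zero = 0" "M6' (Suc 0) = 0" "M6' reg_offset = 14" "M6' reg_one = 1"
    "M6' reg_scratch = scratch_addr n" "M6' reg_flag = Mz reg_flag"
    "\<And>j. M6' (Suc (sim_addr j)) = Mz (Suc (sim_addr j))"
    using agree_onD[OF agree6] regs by (auto simp: M5'_def)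
  define M'' where "M'' = M6'(reg_ans := 1 - Mz reg_flag)"
  have "steps query_prog (arg_input i) (host_cap n) UNIV (Suc 0)
      (query_update_off + length U * block_len, M6') = Some ((length query_prog, M''), [])"
    using query_code(7) M6' host_cap_bounds[OF i]
    by (auto simp: M''_def halted_def step_def wr_def length_query_prog)
  then have run7: "?run 1 (query_update_off + length U * block_len, M6') (length query_prog, M'')"
    by (rule runs_withinI) simp
  have "represents n S M''"
    unfolding represents_def
    using S reach6 word sim6 M6' bits by (auto simp: M''_def)
  moreover have "?run (B * block_len + 9) (query_restore_off, Mz) (length query_prog, M'')"
    using runs_within_trans[OF runs_within_trans[OF run5 run6] run7] by (simp add: algebra_simps)
  ultimately show ?thesis
    by (auto simp: M''_def)
qed

abbreviation operation_time :: nat where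
  "operation_time \<equiv> 3 * B * block_len + 3 * B + 19"

lemma query_run:
  assumes rep: "represents n S M'" and i: "1 \<le> i" "i \<le> n"
  shows "\<exists>M''. host_runs query_prog n i operation_time (0, M') (length query_prog, M'')
           \<and> represents n S M'' \<and> (M'' reg_ans \<noteq> 0 \<longleftrightarrow> (\<forall>s\<in>S. i \<le> s))"
proof -
  let ?run = "host_runs query_prog n i"
  let ?M1' = "M'(reg_arg := i, reg_inp0 := i, reg_inp_len := 0, reg_inp_last := code SA)"
  have S: "S \<subseteq> {1..n}" and M': "M' reg_zero = 0" "M' reg_offset = 14" "M' reg_one = 1"
    "M' reg_scratch = scratch_addr n"
    and bits: "\<And>j. 1 \<le> j \<Longrightarrow> j \<le> n \<Longrightarrow> M' (Suc (sim_addr j)) = (if j \<in> S then 1 else 0)"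
    using rep unfolding represents_def by auto
  obtain M2 ME ME' where reach2: "reach P U B K ((set_word n S)[i - 1 := SA]) M2"
    and run1: "?run (2 * B * block_len + 10) (0, M') (query_clear_off, ME')"
    and simE: "sim_mem ME ME'" and scratch: "\<forall>x. x \<notin> scratch_region B n \<longrightarrow> ME x = M2 x"
    and keptE: "agree_on kept_cells ?M1' ME'" and flag: "ME' reg_flag \<noteq> 0 \<longleftrightarrow> (\<exists>s\<in>S. s < i)"
    using query_probe[OF rep i] by blast
  have ME': "ME' a = ?M1' a" if "a \<in> kept_cells" for a
    using agree_onD[OF keptE that] .
  obtain Mz where run2: "?run (3 * B) (query_clear_off, ME') (query_restore_off, Mz)"
    and simz: "sim_mem M2 Mz" and agreez: "agree_on (ctrl_cells - {reg_tmp, reg_tmp2}) ME' Mz"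
    using query_clear[OF reach2 _ simE scratch] ME' M' by (auto simp: kept_cells_def)
  have Mz: "Mz a = ?M1' a" if "a \<in> kept_cells" for a
    using agree_onD[OF agreez] ME'[OF that] that kept_cells_ctrl by auto
  obtain M'' where run3: "?run (B * block_len + 9) (query_restore_off, Mz) (length query_prog, M'')"
    and rep'': "represents n S M''" and answer: "M'' reg_ans \<noteq> 0 \<longleftrightarrow> Mz reg_flag = 0"
    using query_restore[OF S i reach2 simz] Mz M' bits by (auto simp: kept_cells_def)
  have "Mz reg_flag = ME' reg_flag"
    using agree_onD[OF agreez] by simp
  with answer flag have "M'' reg_ans \<noteq> 0 \<longleftrightarrow> (\<forall>s\<in>S. i \<le> s)"
    by (auto simp: not_less)
  moreover have "?run operation_time (0, M') (length query_prog, M'')"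
    using runs_within_trans[OF runs_within_trans[OF run1 run2] run3] by (simp add: algebra_simps)
  ultimately show ?thesis
    using rep'' by blast
qed

abbreviation host_reach :: "nat \<Rightarrow> nat set \<Rightarrow> mem \<Rightarrow> bool" where
  "host_reach \<equiv> su_reach init_prog test_prog insert_prog remove_prog query_prog (K + B + 6)"

lemma su_reach_represents:
  "host_reach n S M'
    \<Longrightarrow> represents n S M'"
proof (induction rule: su_reach.induct)
  case (init t pc M)
  obtain t' M' where "host_runs init_prog n n t' (0, zero_mem) (length init_prog, M')"
    and "represents n {} M'"
    using init_run by blast
  with halts_within_unique[OF init _ halted_at_end] show ?case by simp
next
  case (ins S M i t pc M')
  obtain M'' where "host_runs insert_prog n i (B * block_len + 9)
      (0, M) (length insert_prog, M'')" and "represents n (insert i S) M''"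
    using update_run[OF ins.IH ins.hyps(2,3)] by blast
  with halts_within_unique[OF ins.hyps(4) _ halted_at_end] show ?case by simp
next
  case (rem S M i t pc M')
  obtain M'' where "host_runs remove_prog n i (B * block_len + 9)
      (0, M) (length remove_prog, M'')" and "represents n (S - {i}) M''"
    using update_run[OF rem.IH rem.hyps(2,3)] by blast
  with halts_within_unique[OF rem.hyps(4) _ halted_at_end] show ?case by simp
next
  case (tst S M i t pc M')
  obtain M'' where "host_runs test_prog n i 5 (0, M) (5, M'')"
    and "represents n S M''"
    using test_run[OF tst.IH tst.hyps(2,3)] by blast
  moreover have "halted test_prog (5, M'')"
    by (simp add: halted_def test_prog_def bit_addr_code_def)
  ultimately show ?case
    using halts_within_unique[OF tst.hyps(4)] by blast
next
  case (qry S M i t pc M')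
  obtain M'' where "host_runs query_prog n i operation_time (0, M) (length query_prog, M'')"
    and "represents n S M''"
    using query_run[OF qry.IH qry.hyps(2,3)] by blast
  with halts_within_unique[OF qry.hyps(4) _ halted_at_end] show ?case by simp
qed

lemma prefix_U1_ds_from_L1:
  "prefix_U1_ds init_prog test_prog insert_prog remove_prog query_prog
     operation_time (K + B + 6)"
  unfolding prefix_U1_ds_def
proof (intro conjI allI impI)
  fix n
  show "\<exists>t c. halts_within init_prog (arg_input n) (host_cap n) UNIV t (0, zero_mem) c"
    using init_run halts_within_if_runs_within[OF _ halted_at_end le_refl] by blast
next
  fix n S M i
  assume "host_reach n S M \<and> 1 \<le> i \<and> i \<le> n"
  then have rep: "represents n S M" and i: "1 \<le> i" "i \<le> n"
    using su_reach_represents by auto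
  have update_time: "B * block_len + 9 \<le> operation_time"
    by simp
  show "\<exists>c. halts_within insert_prog (arg_input i) (host_cap n) UNIV operation_time (0, M) c"
    using update_run[OF rep i, of SB reg_one "insert i S"]
      halts_within_if_runs_within[OF _ halted_at_end update_time] by blast
  show "\<exists>c. halts_within remove_prog (arg_input i) (host_cap n) UNIV operation_time (0, M) c"
    using update_run[OF rep i, of SE reg_zero "S - {i}"]
      halts_within_if_runs_within[OF _ halted_at_end update_time] by blast
  obtain M'' where run: "host_runs test_prog n i 5 (0, M) (5, M'')"
    and answer: "M'' reg_ans \<noteq> 0 \<longleftrightarrow> i \<in> S"
    using test_run[OF rep i] by blast
  have "halted test_prog (5, M'')"
    by (simp add: halted_def test_prog_def bit_addr_code_def)
  with run have "halts_within test_prog (arg_input i) (host_cap n) UNIV operation_time (0, M)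
      (5, M'')"
    by (rule halts_within_if_runs_within) simp
  with answer show "\<exists>pc M'. halts_within test_prog (arg_input i) (host_cap n) UNIV operation_time
      (0, M) (pc, M') \<and> (M' 0 \<noteq> 0) = (i \<in> S)"
    by blast
  show "\<exists>pc M'. halts_within query_prog (arg_input i) (host_cap n) UNIV operation_time
      (0, M) (pc, M') \<and> (M' 0 \<noteq> 0) = (\<forall>s\<in>S. i \<le> s)"
    using query_run[OF rep i] halts_within_if_runs_within[OF _ halted_at_end le_refl] by blast
qed

end

theorem claim7p2:
  assumes "prefix_U1_hypothesis"
  shows "\<not> tractable L1"
proof
  assume "tractable L1"
  then obtain P U E B K where "L1_structure P U E B K"
    unfolding tractable_def L1_structure_def by blast
  then have "\<exists>Init T Ins Rem Q B' K'. prefix_U1_ds Init T Ins Rem Q B' K'"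
    using L1_structure.prefix_U1_ds_from_L1 by blast
  with assms show False
    unfolding prefix_U1_hypothesis_def by blast
qed

end
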